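(* Let $k$ be an algebraically closed field of characteristic $0$, let $A=k\langle x_1,\dots,x_n\rangle/(f_1,\dots,f_h)$ be a noetherian connected graded algebra, let $r\ge1$, $\xi$ a primitive $r$-th root of unity, integers $0<a_j\le r$, and let $G$ be the cyclic group of order $r$ generated by $g=\mathrm{diag}(\xi^{a_1},\dots,\xi^{a_n})$, acting on $A$ (and on $k\langle x_1,\dots,x_n\rangle$) by $g\cdot x_j=\xi^{a_j}x_j$. Then $A*G\cong kQ_G/I$, where $I$ is the two-sided ideal generated by the elements $\phi(f_j*\rho_i)$ for $1\le j\le h$ and $i\in\mathbb{Z}/r\mathbb{Z}$.
   Context: $\rho_i=\frac1r\sum_{p=0}^{r-1}\xi^{ip}g^p\in kG$. The McKay quiver $Q_G$ has vertices $\mathbb{Z}/r\mathbb{Z}$ and arrows $x_{j,i}:i-a_j\to i$ ($i\in\mathbb{Z}/r\mathbb{Z}$, $1\le j\le n$); paths in $kQ_G$ are multiplied by concatenation written left to right, and $e_i$ is the trivial path at $i$. $\phi:k\langle x_1,\dots,x_n\rangle*G\to kQ_G$ is the linear map with $\phi(1*\rho_i)=e_i$ and $\phi(x_{s_1}\cdots x_{s_m}*\rho_i)=x_{s_1,\,i-a_{s_m}-\cdots-a_{s_2}}\cdots x_{s_{m-1},\,i-a_{s_m}}x_{s_m,\,i}$ (it is an algebra isomorphism). The skew group algebra $R*G=R\otimes_kkG$ has multiplication $(a*h)(b*h')=ah(b)*hh'$. *)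

theory Defs
  imports "HOL-Algebra.QuotRing" "HOL-Computational_Algebra.Polynomial"
begin

text \<open>Elements: finitely supported functions from words (lists over the letters 1..n)
  to k; the word [s1,...,sm] stands for the monomial x_s1 ... x_sm.\<close>

definition free_alg :: "nat \<Rightarrow> (nat list \<Rightarrow> 'k::field) ring" where
  "free_alg n = \<lparr> carrier = {F. finite {w. F w \<noteq> 0} \<and> (\<forall>w. F w \<noteq> 0 \<longrightarrow> set w \<subseteq> {1..n})},
      monoid.mult = (\<lambda>F G w. \<Sum>(u,v) \<in> {(u,v). F u \<noteq> 0 \<and> G v \<noteq> 0 \<and> u @ v = w}. F u * G v),
      one = (\<lambda>w. if w = [] then 1 else 0),
      zero = (\<lambda>w. 0),
      add = (\<lambda>F G w. F w + G w) \<rparr>"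

definition free_scalar :: "'k::field \<Rightarrow> nat list \<Rightarrow> 'k" where
  "free_scalar c = (\<lambda>w. if w = [] then c else 0)"

definition wdeg :: "(nat \<Rightarrow> nat) \<Rightarrow> nat list \<Rightarrow> nat" where
  "wdeg a w = (\<Sum>s\<leftarrow>w. a s)"

definition gact :: "'k::field \<Rightarrow> (nat \<Rightarrow> nat) \<Rightarrow> (nat list \<Rightarrow> 'k) \<Rightarrow> (nat list \<Rightarrow> 'k)" where
  "gact \<xi> a F = (\<lambda>w. \<xi> ^ wdeg a w * F w)"

definition homogeneous_pos :: "(nat list \<Rightarrow> 'k::field) \<Rightarrow> bool" where
  "homogeneous_pos F \<longleftrightarrow> (\<exists>d>0. \<forall>w. F w \<noteq> 0 \<longrightarrow> length w = d)"

definition rel_ideal :: "nat \<Rightarrow> (nat \<Rightarrow> nat list \<Rightarrow> 'k::field) \<Rightarrow> nat \<Rightarrow> (nat list \<Rightarrow> 'k) set" where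
  "rel_ideal n f h = genideal (free_alg n) (f ` {1..h})"

definition left_ideal :: "'a set \<Rightarrow> ('a, 'b) ring_scheme \<Rightarrow> bool" where
  "left_ideal I R \<longleftrightarrow> additive_subgroup I R \<and> (\<forall>a\<in>carrier R. \<forall>x\<in>I. a \<otimes>\<^bsub>R\<^esub> x \<in> I)"

definition right_ideal :: "'a set \<Rightarrow> ('a, 'b) ring_scheme \<Rightarrow> bool" where
  "right_ideal I R \<longleftrightarrow> additive_subgroup I R \<and> (\<forall>a\<in>carrier R. \<forall>x\<in>I. x \<otimes>\<^bsub>R\<^esub> a \<in> I)"

definition noetherian_nc :: "('a, 'b) ring_scheme \<Rightarrow> bool" where
  "noetherian_nc R \<longleftrightarrow>
     (\<forall>I :: nat \<Rightarrow> 'a set. (\<forall>m. left_ideal (I m) R \<and> I m \<subseteq> I (Suc m)) \<longrightarrow> (\<exists>N. \<forall>m\<ge>N. I m = I N)) \<and>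
     (\<forall>I :: nat \<Rightarrow> 'a set. (\<forall>m. right_ideal (I m) R \<and> I m \<subseteq> I (Suc m)) \<longrightarrow> (\<exists>N. \<forall>m\<ge>N. I m = I N))"

text \<open>An element F represents sum_{p<r} F p * g^p (F p in A); multiplication
  (a*g^q)(b*g^s) = a g^q(b) * g^(q+s).\<close>
definition skew_alg :: "('a, 'b) ring_scheme \<Rightarrow> ('a \<Rightarrow> 'a) \<Rightarrow> nat \<Rightarrow> (nat \<Rightarrow> 'a) ring" where
  "skew_alg A \<sigma> r = \<lparr> carrier = {F. (\<forall>p<r. F p \<in> carrier A) \<and> (\<forall>p\<ge>r. F p = \<zero>\<^bsub>A\<^esub>)},
      monoid.mult = (\<lambda>F G p. if p < r then
          finsum A (\<lambda>(q,s). F q \<otimes>\<^bsub>A\<^esub> (\<sigma> ^^ q) (G s)) {(q,s). q < r \<and> s < r \<and> (q + s) mod r = p}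
        else \<zero>\<^bsub>A\<^esub>),
      one = (\<lambda>p. if p = 0 then \<one>\<^bsub>A\<^esub> else \<zero>\<^bsub>A\<^esub>),
      zero = (\<lambda>p. \<zero>\<^bsub>A\<^esub>),
      add = (\<lambda>F G p. if p < r then F p \<oplus>\<^bsub>A\<^esub> G p else \<zero>\<^bsub>A\<^esub>) \<rparr>"

text \<open>Vertices: 0..r-1 (= Z/rZ). Arrow x_{j,i} (written (j,i)) goes from i - a_j to i.\<close>
definition arr_src :: "nat \<Rightarrow> (nat \<Rightarrow> nat) \<Rightarrow> nat \<times> nat \<Rightarrow> nat" where
  "arr_src r a e = nat ((int (snd e) - int (a (fst e))) mod int r)"

definition arr_tgt :: "nat \<times> nat \<Rightarrow> nat" where
  "arr_tgt e = snd e"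

definition valid_arrow :: "nat \<Rightarrow> nat \<Rightarrow> nat \<times> nat \<Rightarrow> bool" where
  "valid_arrow n r e \<longleftrightarrow> fst e \<in> {1..n} \<and> snd e < r"

datatype qpath = Triv nat | Arrs "(nat \<times> nat) list"

fun path_src :: "nat \<Rightarrow> (nat \<Rightarrow> nat) \<Rightarrow> qpath \<Rightarrow> nat" where
  "path_src r a (Triv i) = i"
| "path_src r a (Arrs es) = arr_src r a (hd es)"

fun path_tgt :: "qpath \<Rightarrow> nat" where
  "path_tgt (Triv i) = i"
| "path_tgt (Arrs es) = arr_tgt (last es)"

fun valid_path :: "nat \<Rightarrow> nat \<Rightarrow> (nat \<Rightarrow> nat) \<Rightarrow> qpath \<Rightarrow> bool" where
  "valid_path n r a (Triv i) \<longleftrightarrow> i < r"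
| "valid_path n r a (Arrs es) \<longleftrightarrow> es \<noteq> [] \<and> (\<forall>e\<in>set es. valid_arrow n r e) \<and>
      (\<forall>k. Suc k < length es \<longrightarrow> arr_tgt (es ! k) = arr_src r a (es ! Suc k))"

text \<open>Product of two paths (concatenation, left to right); None means the product is 0.\<close>
fun path_cat :: "qpath \<Rightarrow> qpath \<Rightarrow> qpath" where
  "path_cat (Triv i) q = q"
| "path_cat (Arrs es) (Triv j) = Arrs es"
| "path_cat (Arrs es) (Arrs fs) = Arrs (es @ fs)"

definition path_mult :: "nat \<Rightarrow> (nat \<Rightarrow> nat) \<Rightarrow> qpath \<Rightarrow> qpath \<Rightarrow> qpath option" where
  "path_mult r a p q = (if path_tgt p = path_src r a q then Some (path_cat p q) else None)"

definition path_alg :: "nat \<Rightarrow> nat \<Rightarrow> (nat \<Rightarrow> nat) \<Rightarrow> (qpath \<Rightarrow> 'k::field) ring" where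
  "path_alg n r a = \<lparr> carrier = {F. finite {p. F p \<noteq> 0} \<and> (\<forall>p. F p \<noteq> 0 \<longrightarrow> valid_path n r a p)},
      monoid.mult = (\<lambda>F G p. \<Sum>(q1,q2) \<in> {(q1,q2). F q1 \<noteq> 0 \<and> G q2 \<noteq> 0 \<and> path_mult r a q1 q2 = Some p}.
                                F q1 * G q2),
      one = (\<lambda>p. case p of Triv i \<Rightarrow> (if i < r then 1 else 0) | Arrs _ \<Rightarrow> 0),
      zero = (\<lambda>p. 0),
      add = (\<lambda>F G p. F p + G p) \<rparr>"

definition path_scalar :: "nat \<Rightarrow> 'k::field \<Rightarrow> qpath \<Rightarrow> 'k" where
  "path_scalar r c = (\<lambda>p. case p of Triv i \<Rightarrow> (if i < r then c else 0) | Arrs _ \<Rightarrow> 0)"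

text \<open>phi(x_s1 ... x_sm * rho_i) = x_{s1, i - a_sm - ... - a_s2} ... x_{s(m-1), i - a_sm} x_{sm, i},
  phi(1 * rho_i) = e_i.\<close>
definition word_path :: "nat \<Rightarrow> (nat \<Rightarrow> nat) \<Rightarrow> nat list \<Rightarrow> nat \<Rightarrow> qpath" where
  "word_path r a w i = (if w = [] then Triv i else
     Arrs (map (\<lambda>k. (w ! k, nat ((int i - int (\<Sum>l\<in>{k<..<length w}. a (w ! l))) mod int r)))
               [0..<length w]))"

definition phi_elem :: "nat \<Rightarrow> (nat \<Rightarrow> nat) \<Rightarrow> (nat list \<Rightarrow> 'k::field) \<Rightarrow> nat \<Rightarrow> qpath \<Rightarrow> 'k" where
  "phi_elem r a F i = (\<lambda>p. \<Sum>w \<in> {w. F w \<noteq> 0 \<and> word_path r a w i = p}. F w)"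

definition quiver_ideal :: "nat \<Rightarrow> nat \<Rightarrow> (nat \<Rightarrow> nat) \<Rightarrow> (nat \<Rightarrow> nat list \<Rightarrow> 'k::field) \<Rightarrow> nat \<Rightarrow> (qpath \<Rightarrow> 'k) set" where
  "quiver_ideal n r a f h = genideal (path_alg n r a) {phi_elem r a (f j) i | j i. j \<in> {1..h} \<and> i < r}"

end

theory Submission
  imports Defs "HOL-Library.Function_Algebras" "HOL-Algebra.UnivPoly"
begin

(* Write an element of k<x> * G as \<Sum>_p F_p g^p. Since g^p = \<Sum>_i \<xi>^(-ip) \<rho>_i, a discrete
   Fourier transform in p rewrites it as \<Sum>_i H_i \<rho>_i, and a monomial w \<rho>_i is exactly the path
   \<phi>(w * \<rho>_i) of Q_G ending in i. As v \<rho>_i = \<rho>_(i - wt v) v for a word v of weight wt v, the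
   product of two such monomials is the concatenation of the two paths when they match and 0
   otherwise; so \<phi> is an isomorphism k<x> * G \<cong> kQ_G. It maps the ideal I * G of elements with
   all coefficients in I = (f_1, ..., f_h) onto the ideal generated by the \<phi>(f_j * \<rho>_i): these
   generators are images of elements of I * G, and conversely \<phi>(f g^p) = \<phi>(f * 1) \<phi>(1 * g^p)
   with \<phi>(f * 1) = \<Sum>_i \<phi>(f * \<rho>_i). Hence A * G = (k<x>/I) * G and the quotient of kQ_G by
   that ideal are both the quotient of k<x> * G by I * G. *)

lemma sum_fun_apply: "sum f A x = (\<Sum>a\<in>A. f a x)"
  by (induction A rule: infinite_finite_induct) auto

lemma finsum_pointwise:
  assumes "ring R" and add: "\<And>x y. x \<in> carrier R \<Longrightarrow> y \<in> carrier R \<Longrightarrow> x \<oplus>\<^bsub>R\<^esub> y = (\<lambda>w. x w + y w)"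
    and zero: "\<zero>\<^bsub>R\<^esub> = (\<lambda>w. 0)"
    and "finite A" "f \<in> A \<rightarrow> carrier R"
  shows "finsum R f A = (\<lambda>w. \<Sum>x\<in>A. f x w :: 'b::comm_monoid_add)"
  using \<open>finite A\<close> \<open>f \<in> A \<rightarrow> carrier R\<close>
proof (induction A rule: finite_induct)
  case empty
  interpret ring R by fact
  show ?case by (simp add: zero)
next
  case (insert x A)
  interpret ring R by fact
  have "finsum R f (insert x A) = f x \<oplus>\<^bsub>R\<^esub> finsum R f A"
    using insert by (intro finsum_insert) auto
  also have "\<dots> = (\<lambda>w. f x w + finsum R f A w)"
    using insert.prems by (intro add) (auto intro: finsum_closed)
  finally show ?case using insert by simp
qed

lemma finsum_in_ideal:
  assumes "ring R" "ideal I R" "finite A" "\<And>x. x \<in> A \<Longrightarrow> f x \<in> I"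
  shows "finsum R f A \<in> I"
  using assms(3,4)
proof (induction A rule: finite_induct)
  case empty
  interpret ring R by fact
  show ?case using \<open>ideal I R\<close> by (simp add: additive_subgroup.zero_closed ideal.axioms(1))
next
  case (insert x A)
  interpret ring R by fact
  have "f \<in> insert x A \<rightarrow> carrier R" using insert ideal.Icarr[OF \<open>ideal I R\<close>] by auto
  then have "finsum R f (insert x A) = f x \<oplus>\<^bsub>R\<^esub> finsum R f A"
    using insert by (intro finsum_insert) auto
  then show ?case using insert \<open>ideal I R\<close> by (simp add: additive_subgroup.a_closed ideal.axioms(1))
qed

lemma ring_iso_of_equal_fibres:
  assumes \<pi>: "\<pi> \<in> ring_hom R A" "\<pi> ` carrier R = carrier A"
    and \<psi>: "\<psi> \<in> ring_hom R B" "\<psi> ` carrier R = carrier B"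
    and fibres: "\<And>x y. x \<in> carrier R \<Longrightarrow> y \<in> carrier R \<Longrightarrow> \<pi> x = \<pi> y \<longleftrightarrow> \<psi> x = \<psi> y"
    and closed: "\<And>x y. x \<in> carrier R \<Longrightarrow> y \<in> carrier R \<Longrightarrow> x \<otimes>\<^bsub>R\<^esub> y \<in> carrier R"
      "\<And>x y. x \<in> carrier R \<Longrightarrow> y \<in> carrier R \<Longrightarrow> x \<oplus>\<^bsub>R\<^esub> y \<in> carrier R" "\<one>\<^bsub>R\<^esub> \<in> carrier R"
  defines "\<Phi> \<equiv> \<lambda>X. \<psi> (SOME x. x \<in> carrier R \<and> \<pi> x = X)"
  shows "\<Phi> \<in> ring_iso A B" and "\<And>x. x \<in> carrier R \<Longrightarrow> \<Phi> (\<pi> x) = \<psi> x"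
proof -
  show \<Phi>_\<pi>: "\<Phi> (\<pi> x) = \<psi> x" if x: "x \<in> carrier R" for x
  proof -
    have "(SOME y. y \<in> carrier R \<and> \<pi> y = \<pi> x) \<in> carrier R \<and> \<pi> (SOME y. y \<in> carrier R \<and> \<pi> y = \<pi> x) = \<pi> x"
      by (rule someI[of _ x]) (use x in simp)
    then show ?thesis unfolding \<Phi>_def using fibres x by blast
  qed
  have lift: "\<exists>x\<in>carrier R. X = \<pi> x" if "X \<in> carrier A" for X
    using that \<pi>(2) by blast
  show "\<Phi> \<in> ring_iso A B"
  proof (rule ring_iso_memI)
    fix X assume "X \<in> carrier A"
    then obtain x where "x \<in> carrier R" "X = \<pi> x" using lift by blast
    then show "\<Phi> X \<in> carrier B" using \<Phi>_\<pi> ring_hom_closed[OF \<psi>(1)] by simp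
  next
    fix X Y assume "X \<in> carrier A" "Y \<in> carrier A"
    then obtain x y where x: "x \<in> carrier R" "X = \<pi> x" and y: "y \<in> carrier R" "Y = \<pi> y" using lift by blast
    have "\<Phi> (X \<otimes>\<^bsub>A\<^esub> Y) = \<Phi> (\<pi> (x \<otimes>\<^bsub>R\<^esub> y))" using x y ring_hom_mult[OF \<pi>(1)] by simp
    also have "\<dots> = \<psi> x \<otimes>\<^bsub>B\<^esub> \<psi> y" using x y closed(1) \<Phi>_\<pi> ring_hom_mult[OF \<psi>(1)] by simp
    finally show "\<Phi> (X \<otimes>\<^bsub>A\<^esub> Y) = \<Phi> X \<otimes>\<^bsub>B\<^esub> \<Phi> Y" using x y \<Phi>_\<pi> by simp
    have "\<Phi> (X \<oplus>\<^bsub>A\<^esub> Y) = \<Phi> (\<pi> (x \<oplus>\<^bsub>R\<^esub> y))" using x y ring_hom_add[OF \<pi>(1)] by simp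
    also have "\<dots> = \<psi> x \<oplus>\<^bsub>B\<^esub> \<psi> y" using x y closed(2) \<Phi>_\<pi> ring_hom_add[OF \<psi>(1)] by simp
    finally show "\<Phi> (X \<oplus>\<^bsub>A\<^esub> Y) = \<Phi> X \<oplus>\<^bsub>B\<^esub> \<Phi> Y" using x y \<Phi>_\<pi> by simp
  next
    show "\<Phi> \<one>\<^bsub>A\<^esub> = \<one>\<^bsub>B\<^esub>"
      using \<Phi>_\<pi>[OF closed(3)] ring_hom_one[OF \<pi>(1)] ring_hom_one[OF \<psi>(1)] by simp
  next
    have "inj_on \<Phi> (carrier A)"
    proof (rule inj_onI)
      fix X Y assume "X \<in> carrier A" "Y \<in> carrier A" and eq: "\<Phi> X = \<Phi> Y"
      then obtain x y where x: "x \<in> carrier R" "X = \<pi> x" and y: "y \<in> carrier R" "Y = \<pi> y" using lift by blast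
      then show "X = Y" using eq \<Phi>_\<pi> fibres by simp
    qed
    moreover have "\<Phi> ` carrier A = carrier B"
    proof -
      have "\<Phi> ` carrier A = \<Phi> ` \<pi> ` carrier R" using \<pi>(2) by simp
      also have "\<dots> = \<psi> ` carrier R" using \<Phi>_\<pi> by (simp add: image_image cong: image_cong)
      finally show ?thesis using \<psi>(2) by simp
    qed
    ultimately show "bij_betw \<Phi> (carrier A) (carrier B)" by (simp add: bij_betw_def)
  qed
qed

section \<open>Twisted word algebras\<close>

definition word_splits :: "'a list \<Rightarrow> ('a list \<times> 'a list) set" where
  "word_splits w = {(u, v). u @ v = w}"

lemma word_splits_eq: "word_splits w = (\<lambda>k. (take k w, drop k w)) ` {..length w}"
proof -
  have "\<exists>k\<le>length w. u = take k w \<and> v = drop k w" if "u @ v = w" for u v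
    using that by (intro exI[of _ "length u"]) auto
  then show ?thesis unfolding word_splits_def by (auto simp: image_def)
qed

lemma finite_word_splits [simp]: "finite (word_splits w)"
  by (simp add: word_splits_eq)

lemma mem_word_splits [simp]: "x \<in> word_splits w \<longleftrightarrow> fst x @ snd x = w"
  by (cases x) (simp add: word_splits_def)

lemma sum_word_splits_Nil_left: "(\<Sum>(u, v)\<in>word_splits w. if u = [] then f v else 0) = f w"
proof -
  have "(\<Sum>(u, v)\<in>word_splits w. if u = [] then f v else 0)
      = (\<Sum>x\<in>word_splits w. if x = ([], w) then f w else 0)"
  proof (intro sum.cong refl)
    fix x assume "x \<in> word_splits w"
    then show "(case x of (u, v) \<Rightarrow> if u = [] then f v else 0) = (if x = ([], w) then f w else 0)"
      by (cases x) auto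
  qed
  then show ?thesis by simp
qed

lemma sum_word_splits_Nil_right: "(\<Sum>(u, v)\<in>word_splits w. if v = [] then f u else 0) = f w"
proof -
  have "(\<Sum>(u, v)\<in>word_splits w. if v = [] then f u else 0)
      = (\<Sum>x\<in>word_splits w. if x = (w, []) then f w else 0)"
  proof (intro sum.cong refl)
    fix x assume "x \<in> word_splits w"
    then show "(case x of (u, v) \<Rightarrow> if v = [] then f u else 0) = (if x = (w, []) then f w else 0)"
      by (cases x) auto
  qed
  then show ?thesis by simp
qed

text \<open>Elements are sums of monomials \<open>u c\<close>, the coefficient written to the right of the word;
  moving \<open>c\<close> to the right past a word \<open>v\<close> twists it into \<open>\<tau> v c\<close>, so
  \<open>(u c) (v d) = (u v) (\<tau> v c * d)\<close>.\<close>

definition twisted_conv ::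
    "('a list \<Rightarrow> 'c \<Rightarrow> 'c) \<Rightarrow> ('a list \<Rightarrow> 'c::ring) \<Rightarrow> ('a list \<Rightarrow> 'c) \<Rightarrow> 'a list \<Rightarrow> 'c" where
  "twisted_conv \<tau> F G w = (\<Sum>(u, v)\<in>word_splits w. \<tau> v (F u) * G v)"

definition twisted_word_alg ::
    "('a list \<Rightarrow> 'c \<Rightarrow> 'c) \<Rightarrow> 'a list set \<Rightarrow> 'c set \<Rightarrow> 'c \<Rightarrow> ('a list \<Rightarrow> 'c::ring) ring" where
  "twisted_word_alg \<tau> S C e =
    \<lparr> carrier = {F. finite {w. F w \<noteq> 0} \<and> (\<forall>w. F w \<noteq> 0 \<longrightarrow> w \<in> S) \<and> (\<forall>w. F w \<in> C)},
      monoid.mult = twisted_conv \<tau>, one = (\<lambda>w. if w = [] then e else 0), zero = (\<lambda>w. 0),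
      add = (\<lambda>F G w. F w + G w) \<rparr>"

locale word_twist =
  fixes \<tau> :: "'a list \<Rightarrow> 'c::ring \<Rightarrow> 'c" and S :: "'a list set" and C :: "'c set" and e :: 'c
  assumes twist_add: "\<tau> v (x + y) = \<tau> v x + \<tau> v y"
    and twist_mult: "\<tau> v (x * y) = \<tau> v x * \<tau> v y"
    and twist_Nil: "x \<in> C \<Longrightarrow> \<tau> [] x = x"
    and twist_append: "\<tau> (u @ v) x = \<tau> v (\<tau> u x)"
    and twist_closed: "x \<in> C \<Longrightarrow> \<tau> v x \<in> C"
    and twist_unit: "\<tau> v e = e"
    and add_closed: "x \<in> C \<Longrightarrow> y \<in> C \<Longrightarrow> x + y \<in> C"
    and uminus_closed: "x \<in> C \<Longrightarrow> - x \<in> C"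
    and mult_closed: "x \<in> C \<Longrightarrow> y \<in> C \<Longrightarrow> x * y \<in> C"
    and zero_closed: "0 \<in> C" and unit_closed: "e \<in> C"
    and unit_left: "x \<in> C \<Longrightarrow> e * x = x" and unit_right: "x \<in> C \<Longrightarrow> x * e = x"
    and Nil_in_S: "[] \<in> S" and append_in_S: "u @ v \<in> S \<longleftrightarrow> u \<in> S \<and> v \<in> S"
begin

lemma twist_zero [simp]: "\<tau> v 0 = 0"
  using twist_add[of v 0 0] by simp

lemma twist_sum: "\<tau> v (sum f A) = (\<Sum>x\<in>A. \<tau> v (f x))"
  by (induction A rule: infinite_finite_induct) (auto simp: twist_add)

lemma sum_closed: "(\<And>x. x \<in> A \<Longrightarrow> f x \<in> C) \<Longrightarrow> sum f A \<in> C"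
  by (induction A rule: infinite_finite_induct) (auto simp: zero_closed add_closed)

lemma twisted_conv_assoc: "twisted_conv \<tau> (twisted_conv \<tau> F G) H = twisted_conv \<tau> F (twisted_conv \<tau> G H)"
proof
  fix w :: "'a list"
  let ?T = "{(x, y, z). x @ y @ z = w}"
  let ?g = "\<lambda>(x, y, z). \<tau> z (\<tau> y (F x)) * \<tau> z (G y) * H z"
  have "twisted_conv \<tau> (twisted_conv \<tau> F G) H w
      = (\<Sum>(u, z)\<in>word_splits w. \<Sum>(x, y)\<in>word_splits u. \<tau> z (\<tau> y (F x)) * \<tau> z (G y) * H z)"
    unfolding twisted_conv_def
    by (intro sum.cong refl) (auto simp: twist_sum twist_mult sum_distrib_right case_prod_beta)
  also have "\<dots> = (\<Sum>((u, z), (x, y))\<in>Sigma (word_splits w) (\<lambda>(u, z). word_splits u).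
                     \<tau> z (\<tau> y (F x)) * \<tau> z (G y) * H z)"
    by (subst sum.Sigma[symmetric]) (auto simp: case_prod_beta)
  also have "\<dots> = sum ?g ?T"
    by (rule sum.reindex_bij_witness[where i = "\<lambda>(x, y, z). ((x @ y, z), (x, y))"
          and j = "\<lambda>((u, z), (x, y)). (x, y, z)"]) (auto simp: word_splits_def)
  finally have left: "twisted_conv \<tau> (twisted_conv \<tau> F G) H w = sum ?g ?T" .
  have move_past: "\<tau> v c * (\<Sum>(y, z)\<in>word_splits v. \<tau> z (G y) * H z)
      = (\<Sum>(y, z)\<in>word_splits v. \<tau> z (\<tau> y c) * \<tau> z (G y) * H z)" for v c
    unfolding sum_distrib_left by (rule sum.cong) (auto simp: twist_append mult.assoc)
  have "twisted_conv \<tau> F (twisted_conv \<tau> G H) w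
      = (\<Sum>(x, v)\<in>word_splits w. \<Sum>(y, z)\<in>word_splits v. \<tau> z (\<tau> y (F x)) * \<tau> z (G y) * H z)"
    unfolding twisted_conv_def
    by (intro sum.cong refl) (auto simp: move_past)
  also have "\<dots> = (\<Sum>((x, v), (y, z))\<in>Sigma (word_splits w) (\<lambda>(x, v). word_splits v).
                     \<tau> z (\<tau> y (F x)) * \<tau> z (G y) * H z)"
    by (subst sum.Sigma[symmetric]) (auto simp: case_prod_beta)
  also have "\<dots> = sum ?g ?T"
    by (rule sum.reindex_bij_witness[where i = "\<lambda>(x, y, z). ((x, y @ z), (y, z))"
          and j = "\<lambda>((x, v), (y, z)). (x, y, z)"]) (auto simp: word_splits_def)
  finally show "twisted_conv \<tau> (twisted_conv \<tau> F G) H w = twisted_conv \<tau> F (twisted_conv \<tau> G H) w"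
    using left by simp
qed

lemma twisted_conv_one_left:
  assumes "\<And>w. F w \<in> C"
  shows "twisted_conv \<tau> (\<lambda>w. if w = [] then e else 0) F = F"
proof
  fix w
  have "twisted_conv \<tau> (\<lambda>w. if w = [] then e else 0) F w
      = (\<Sum>(u, v)\<in>word_splits w. if u = [] then F v else 0)"
    unfolding twisted_conv_def by (intro sum.cong refl) (auto simp: twist_unit unit_left assms)
  then show "twisted_conv \<tau> (\<lambda>w. if w = [] then e else 0) F w = F w"
    by (simp add: sum_word_splits_Nil_left)
qed

lemma twisted_conv_one_right:
  assumes "\<And>w. F w \<in> C"
  shows "twisted_conv \<tau> F (\<lambda>w. if w = [] then e else 0) = F"
proof
  fix w
  have "twisted_conv \<tau> F (\<lambda>w. if w = [] then e else 0) w
      = (\<Sum>(u, v)\<in>word_splits w. if v = [] then F u else 0)"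
    unfolding twisted_conv_def by (intro sum.cong refl) (auto simp: twist_Nil unit_right assms)
  then show "twisted_conv \<tau> F (\<lambda>w. if w = [] then e else 0) w = F w"
    by (simp add: sum_word_splits_Nil_right)
qed

lemma twisted_conv_add_left:
  "twisted_conv \<tau> (\<lambda>w. F w + G w) H = (\<lambda>w. twisted_conv \<tau> F H w + twisted_conv \<tau> G H w)"
  unfolding twisted_conv_def by (auto simp: twist_add distrib_right sum.distrib case_prod_beta)

lemma twisted_conv_add_right:
  "twisted_conv \<tau> H (\<lambda>w. F w + G w) = (\<lambda>w. twisted_conv \<tau> H F w + twisted_conv \<tau> H G w)"
  unfolding twisted_conv_def by (auto simp: distrib_left sum.distrib case_prod_beta)

lemma twisted_conv_nonzero_factors:
  assumes "twisted_conv \<tau> F G w \<noteq> 0"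
  obtains u v where "u @ v = w" "F u \<noteq> 0" "G v \<noteq> 0"
proof -
  have "\<exists>(u, v)\<in>word_splits w. \<tau> v (F u) * G v \<noteq> 0"
  proof (rule ccontr)
    assume "\<not> (\<exists>(u, v)\<in>word_splits w. \<tau> v (F u) * G v \<noteq> 0)"
    then have "twisted_conv \<tau> F G w = 0"
      unfolding twisted_conv_def by (intro sum.neutral) auto
    with assms show False by simp
  qed
  then obtain u v where "u @ v = w" "\<tau> v (F u) * G v \<noteq> 0" by auto
  then show ?thesis by (intro that[of u v]) (auto simp del: mult_eq_0_iff)
qed

lemma twisted_conv_closed:
  assumes F: "F \<in> carrier (twisted_word_alg \<tau> S C e)" and G: "G \<in> carrier (twisted_word_alg \<tau> S C e)"
  shows "twisted_conv \<tau> F G \<in> carrier (twisted_word_alg \<tau> S C e)"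
proof -
  have fin: "finite {w. F w \<noteq> 0}" "finite {w. G w \<noteq> 0}"
    and in_S: "\<And>w. F w \<noteq> 0 \<Longrightarrow> w \<in> S" "\<And>w. G w \<noteq> 0 \<Longrightarrow> w \<in> S"
    and in_C: "\<And>w. F w \<in> C" "\<And>w. G w \<in> C"
    using F G by (auto simp: twisted_word_alg_def)
  have supp: "{w. twisted_conv \<tau> F G w \<noteq> 0} \<subseteq> (\<lambda>(u, v). u @ v) ` ({w. F w \<noteq> 0} \<times> {w. G w \<noteq> 0})"
  proof
    fix w assume "w \<in> {w. twisted_conv \<tau> F G w \<noteq> 0}"
    then obtain u v where "u @ v = w" "F u \<noteq> 0" "G v \<noteq> 0"
      by (auto elim: twisted_conv_nonzero_factors)
    then show "w \<in> (\<lambda>(u, v). u @ v) ` ({w. F w \<noteq> 0} \<times> {w. G w \<noteq> 0})"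
      by (intro image_eqI[of _ _ "(u, v)"]) auto
  qed
  have "finite {w. twisted_conv \<tau> F G w \<noteq> 0}"
    by (rule finite_subset[OF supp]) (use fin in simp)
  moreover have "w \<in> S" if "twisted_conv \<tau> F G w \<noteq> 0" for w
    using that by (elim twisted_conv_nonzero_factors) (auto simp: append_in_S in_S)
  moreover have "twisted_conv \<tau> F G w \<in> C" for w
    unfolding twisted_conv_def
    by (intro sum_closed) (simp add: case_prod_beta mult_closed twist_closed in_C)
  ultimately show ?thesis unfolding twisted_word_alg_def by simp
qed

lemma pointwise_add_closed:
  assumes "F \<in> carrier (twisted_word_alg \<tau> S C e)" "G \<in> carrier (twisted_word_alg \<tau> S C e)"
  shows "(\<lambda>w. F w + G w) \<in> carrier (twisted_word_alg \<tau> S C e)"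
proof -
  have "{w. F w + G w \<noteq> 0} \<subseteq> {w. F w \<noteq> 0} \<union> {w. G w \<noteq> 0}" by auto
  then show ?thesis
    using assms by (auto simp: twisted_word_alg_def add_closed intro: finite_subset)
qed

lemma twisted_word_alg_ring: "ring (twisted_word_alg \<tau> S C e)"
proof -
  have one: "(\<lambda>w. if w = [] then e else 0) \<in> carrier (twisted_word_alg \<tau> S C e)"
    by (auto simp: twisted_word_alg_def Nil_in_S unit_closed zero_closed
        intro: finite_subset[of _ "{[]}"])
  show ?thesis
    apply (rule ringI)
       apply (rule abelian_groupI)
    subgoal for x y using pointwise_add_closed[of x y] by (simp add: twisted_word_alg_def)
    subgoal by (simp add: twisted_word_alg_def zero_closed)
    subgoal by (simp add: twisted_word_alg_def add.assoc)
    subgoal by (simp add: twisted_word_alg_def add.commute)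
    subgoal by (simp add: twisted_word_alg_def)
    subgoal for x by (rule bexI[of _ "\<lambda>w. - x w"]) (auto simp: twisted_word_alg_def uminus_closed)
      apply (rule monoidI)
    subgoal for x y using twisted_conv_closed[of x y] by (simp add: twisted_word_alg_def)
    subgoal using one by (simp add: twisted_word_alg_def)
    subgoal by (simp add: twisted_word_alg_def twisted_conv_assoc)
    subgoal by (simp add: twisted_word_alg_def twisted_conv_one_left)
    subgoal by (simp add: twisted_word_alg_def twisted_conv_one_right)
    subgoal by (simp add: twisted_word_alg_def twisted_conv_add_left)
    subgoal by (simp add: twisted_word_alg_def twisted_conv_add_right)
    done
qed

end

section \<open>The free algebra and the action of \<open>G\<close>\<close>

lemma free_alg_carrier_iff:
  "(F :: nat list \<Rightarrow> 'k::field) \<in> carrier (free_alg n) \<longleftrightarrow>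
     finite {w. F w \<noteq> 0} \<and> (\<forall>w. F w \<noteq> 0 \<longrightarrow> set w \<subseteq> {1..n})"
  by (simp add: free_alg_def)

lemma free_alg_mult: "monoid.mult (free_alg n) = (twisted_conv (\<lambda>v x. x) :: _ \<Rightarrow> _ \<Rightarrow> _ \<Rightarrow> 'k::field)"
proof (intro ext)
  fix F G :: "nat list \<Rightarrow> 'k" and w
  have "(\<Sum>(u, v)\<in>{(u, v). F u \<noteq> 0 \<and> G v \<noteq> 0 \<and> u @ v = w}. F u * G v)
      = (\<Sum>(u, v)\<in>word_splits w. F u * G v)"
    by (rule sum.mono_neutral_left) (use finite_word_splits[of w] in \<open>auto simp: word_splits_def\<close>)
  then show "(F \<otimes>\<^bsub>free_alg n\<^esub> G) w = twisted_conv (\<lambda>v x. x) F G w"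
    by (simp add: free_alg_def twisted_conv_def)
qed

lemma free_alg_eq_twisted_word_alg:
  "free_alg n = twisted_word_alg (\<lambda>v x. x) {w. set w \<subseteq> {1..n}} UNIV (1::'k::field)"
proof -
  have "free_alg n = \<lparr>carrier = carrier (free_alg n), monoid.mult = monoid.mult (free_alg n),
      one = one (free_alg n), zero = zero (free_alg n), add = add (free_alg n)\<rparr>"
    by (simp add: free_alg_def)
  also have "\<dots> = twisted_word_alg (\<lambda>v x. x) {w. set w \<subseteq> {1..n}} UNIV (1::'k::field)"
    unfolding free_alg_mult by (simp add: free_alg_def twisted_word_alg_def)
  finally show ?thesis .
qed

lemma ring_free_alg: "ring (free_alg n :: (nat list \<Rightarrow> 'k::field) ring)"
proof -
  interpret word_twist "\<lambda>v x. x" "{w. set w \<subseteq> {1..n}}" UNIV "1::'k"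
    by unfold_locales auto
  show ?thesis unfolding free_alg_eq_twisted_word_alg by (rule twisted_word_alg_ring)
qed

lemma finsum_free_alg:
  assumes "finite A" "f \<in> A \<rightarrow> carrier (free_alg n)"
  shows "finsum (free_alg n) f A = (\<lambda>w. \<Sum>x\<in>A. (f x w :: 'k::field))"
  by (rule finsum_pointwise[OF ring_free_alg _ _ assms]) (simp_all add: free_alg_def)

lemma free_scalar_carrier: "free_scalar c \<in> carrier (free_alg n)"
  by (auto simp: free_alg_carrier_iff free_scalar_def intro: finite_subset[of _ "{[]}"])

lemma free_scalar_mult: "free_scalar c \<otimes>\<^bsub>free_alg n\<^esub> x = (\<lambda>w. c * x w :: 'k::field)"
proof
  fix w
  have "(free_scalar c \<otimes>\<^bsub>free_alg n\<^esub> x) w = (\<Sum>(u, v)\<in>word_splits w. if u = [] then c * x v else 0)"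
    unfolding free_alg_mult twisted_conv_def by (intro sum.cong refl) (auto simp: free_scalar_def)
  then show "(free_scalar c \<otimes>\<^bsub>free_alg n\<^esub> x) w = c * x w" by (simp add: sum_word_splits_Nil_left)
qed

lemma wdeg_Nil [simp]: "wdeg a [] = 0"
  by (simp add: wdeg_def)

lemma wdeg_Cons [simp]: "wdeg a (s # w) = a s + wdeg a w"
  by (simp add: wdeg_def)

lemma wdeg_append [simp]: "wdeg a (u @ v) = wdeg a u + wdeg a v"
  by (simp add: wdeg_def)

lemma wdeg_eq_sum_nth: "wdeg a w = (\<Sum>l<length w. a (w ! l))"
  unfolding wdeg_def by (simp add: sum_list_sum_nth atLeast0LessThan)

lemma gact_funpow: "(gact \<xi> a ^^ q) G = (\<lambda>w. \<xi> ^ (q * wdeg a w) * G w)"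
  by (induction q) (auto simp: gact_def power_add mult.assoc)

lemma gact_funpow_carrier:
  assumes "G \<in> carrier (free_alg n)"
  shows "(gact \<xi> a ^^ q) G \<in> carrier (free_alg n :: (nat list \<Rightarrow> 'k::field) ring)"
proof -
  have "{w. \<xi> ^ (q * wdeg a w) * G w \<noteq> 0} \<subseteq> {w. G w \<noteq> 0}" by auto
  then show ?thesis
    using assms unfolding gact_funpow free_alg_carrier_iff by (auto intro: finite_subset)
qed

lemma gact_add:
  "gact \<xi> a (x \<oplus>\<^bsub>free_alg n\<^esub> y) = gact \<xi> a x \<oplus>\<^bsub>free_alg n\<^esub> gact \<xi> a (y :: nat list \<Rightarrow> 'k::field)"
  by (auto simp: gact_def free_alg_def algebra_simps)

section \<open>Paths in the McKay quiver\<close>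

text \<open>The path of the word \<open>v\<close> ending in the vertex \<open>i\<close> starts in \<open>vertex_shift r a i v\<close>.\<close>

abbreviation vertex_shift :: "nat \<Rightarrow> (nat \<Rightarrow> nat) \<Rightarrow> nat \<Rightarrow> nat list \<Rightarrow> nat" where
  "vertex_shift r a i v \<equiv> nat ((int i - int (wdeg a v)) mod int r)"

fun word_arrows :: "nat \<Rightarrow> (nat \<Rightarrow> nat) \<Rightarrow> nat list \<Rightarrow> nat \<Rightarrow> (nat \<times> nat) list" where
  "word_arrows r a [] i = []"
| "word_arrows r a (s # w) i = (s, vertex_shift r a i w) # word_arrows r a w i"

fun path_word :: "qpath \<Rightarrow> nat list" where
  "path_word (Triv i) = []"
| "path_word (Arrs es) = map fst es"

lemma word_path_eq: "word_path r a w i = (if w = [] then Triv i else Arrs (word_arrows r a w i))"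
proof -
  have shift: "(\<Sum>l\<in>{Suc k<..<Suc m}. f l) = (\<Sum>l\<in>{k<..<m}. f (Suc l))"
    and shift0: "(\<Sum>l\<in>{0<..<Suc m}. f l) = (\<Sum>l<m. f (Suc l))" for k m and f :: "nat \<Rightarrow> nat"
    by (rule sum.reindex_bij_witness[where i = Suc and j = "\<lambda>l. l - 1"]; auto)+
  have "map (\<lambda>k. (w ! k, nat ((int i - int (\<Sum>l\<in>{k<..<length w}. a (w ! l))) mod int r))) [0..<length w]
      = word_arrows r a w i"
  proof (induction w)
    case (Cons s w)
    have "[0..<length (s # w)] = 0 # map Suc [0..<length w]"
      using upt_conv_Cons[of 0 "Suc (length w)"] map_Suc_upt[of 0 "length w"] by simp
    then have "map (\<lambda>k. ((s # w) ! k, nat ((int i - int (\<Sum>l\<in>{k<..<length (s # w)}. a ((s # w) ! l))) mod int r)))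
          [0..<length (s # w)]
      = (s, nat ((int i - int (\<Sum>l\<in>{0<..<Suc (length w)}. a ((s # w) ! l))) mod int r)) #
        map (\<lambda>k. (w ! k, nat ((int i - int (\<Sum>l\<in>{Suc k<..<Suc (length w)}. a ((s # w) ! l))) mod int r)))
          [0..<length w]"
      by simp
    also have "\<dots> = (s, vertex_shift r a i w) #
        map (\<lambda>k. (w ! k, nat ((int i - int (\<Sum>l\<in>{k<..<length w}. a (w ! l))) mod int r))) [0..<length w]"
      by (simp only: shift shift0 wdeg_eq_sum_nth nth_Cons_Suc)
    finally show ?case using Cons by simp
  qed simp
  then show ?thesis unfolding word_path_def by simp
qed

lemma word_arrows_fst [simp]: "map fst (word_arrows r a w i) = w"
  by (induction w) auto

lemma word_arrows_eq_Nil_iff [simp]: "word_arrows r a w i = [] \<longleftrightarrow> w = []"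
  by (cases w) auto

lemma valid_path_Cons:
  "valid_path n r a (Arrs (e # es)) \<longleftrightarrow> valid_arrow n r e \<and>
     (es = [] \<or> (arr_tgt e = arr_src r a (hd es) \<and> valid_path n r a (Arrs es)))"
proof -
  have "(\<forall>k. Suc k < length (e # es) \<longrightarrow> arr_tgt ((e # es) ! k) = arr_src r a ((e # es) ! Suc k))
      \<longleftrightarrow> (es = [] \<or> (arr_tgt e = arr_src r a (hd es) \<and>
            (\<forall>k. Suc k < length es \<longrightarrow> arr_tgt (es ! k) = arr_src r a (es ! Suc k))))"
    (is "?links \<longleftrightarrow> _")
  proof
    assume links: ?links
    show "es = [] \<or> (arr_tgt e = arr_src r a (hd es) \<and>
            (\<forall>k. Suc k < length es \<longrightarrow> arr_tgt (es ! k) = arr_src r a (es ! Suc k)))"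
      using links[rule_format, of 0] links[rule_format, of "Suc _"] by (cases es) auto
  next
    assume links': "es = [] \<or> (arr_tgt e = arr_src r a (hd es) \<and>
            (\<forall>k. Suc k < length es \<longrightarrow> arr_tgt (es ! k) = arr_src r a (es ! Suc k)))"
    show ?links
    proof (intro allI impI)
      fix k assume "Suc k < length (e # es)"
      with links' show "arr_tgt ((e # es) ! k) = arr_src r a ((e # es) ! Suc k)"
        by (cases k) (auto simp: neq_Nil_conv)
    qed
  qed
  then show ?thesis by auto
qed

locale mckay_quiver =
  fixes n r :: nat and a :: "nat \<Rightarrow> nat"
  assumes r_pos: "0 < r"
begin

lemma vertex_shift_less: "vertex_shift r a i v < r"
  using r_pos by (simp add: nat_less_iff)

lemma vertex_shift_append: "vertex_shift r a (vertex_shift r a i v) u = vertex_shift r a i (u @ v)"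
  using r_pos by (simp add: mod_diff_left_eq algebra_simps)

lemma word_arrows_append:
  "word_arrows r a (u @ v) i = word_arrows r a u (vertex_shift r a i v) @ word_arrows r a v i"
proof (induction u)
  case (Cons s u)
  then show ?case by (simp only: append_Cons word_arrows.simps vertex_shift_append append.simps)
qed simp

lemma word_arrows_last: "w \<noteq> [] \<Longrightarrow> i < r \<Longrightarrow> snd (last (word_arrows r a w i)) = i"
  by (induction w) (auto simp: neq_Nil_conv)

lemma valid_word_arrows:
  assumes "i < r" "set w \<subseteq> {1..n}" "w \<noteq> []"
  shows "valid_path n r a (Arrs (word_arrows r a w i))"
  using assms(2,3)
proof (induction w)
  case (Cons s w)
  show ?case
  proof (cases "w = []")
    case True then show ?thesis
      using Cons.prems assms(1) by (simp add: valid_path_Cons valid_arrow_def)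
  next
    case False
    have "arr_tgt (s, vertex_shift r a i w) = arr_src r a (hd (word_arrows r a w i))"
      using False r_pos by (cases w) (auto simp: arr_tgt_def arr_src_def mod_diff_left_eq algebra_simps)
    then show ?thesis using Cons False
      by (simp only: word_arrows.simps valid_path_Cons) (auto simp: valid_arrow_def vertex_shift_less)
  qed
qed simp

lemma valid_path_eq_word_arrows:
  assumes "valid_path n r a (Arrs es)"
  shows "es = word_arrows r a (map fst es) (snd (last es))"
  using assms
proof (induction es)
  case (Cons e es)
  show ?case
  proof (cases "es = []")
    case True
    then have "snd e < r" using Cons.prems by (simp only: valid_path_Cons) (simp add: valid_arrow_def)
    then show ?thesis using True by (cases e) simp
  next
    case False
    then have "valid_path n r a (Arrs es)" and link: "arr_tgt e = arr_src r a (hd es)"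
      using Cons.prems by (simp_all only: valid_path_Cons) simp_all
    then have IH: "es = word_arrows r a (map fst es) (snd (last es))" using Cons.IH by simp
    obtain s w where sw: "map fst es = s # w" using False by (cases es) auto
    have "hd es = (s, vertex_shift r a (snd (last es)) w)"
      using IH sw by (metis list.sel(1) word_arrows.simps(2))
    then have "snd e = vertex_shift r a (snd (last es)) (s # w)"
      using link r_pos by (simp add: arr_tgt_def arr_src_def mod_diff_left_eq algebra_simps)
    then have "e = (fst e, vertex_shift r a (snd (last es)) (map fst es))"
      using sw by (cases e) simp
    then show ?thesis using IH False
      by (metis last_ConsR list.simps(9) word_arrows.simps(2))
  qed
qed simp

lemma path_word_word_path [simp]: "path_word (word_path r a w i) = w"
  by (simp add: word_path_eq)

lemma path_tgt_word_path [simp]: "i < r \<Longrightarrow> path_tgt (word_path r a w i) = i"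
  by (auto simp: word_path_eq arr_tgt_def word_arrows_last)

lemma path_src_word_path: "i < r \<Longrightarrow> path_src r a (word_path r a w i) = vertex_shift r a i w"
  by (cases w) (auto simp: word_path_eq arr_src_def mod_diff_left_eq algebra_simps)

lemma valid_word_path_iff: "i < r \<Longrightarrow> valid_path n r a (word_path r a w i) \<longleftrightarrow> set w \<subseteq> {1..n}"
proof (cases "w = []")
  case False
  assume i: "i < r"
  show ?thesis
  proof
    assume "valid_path n r a (word_path r a w i)"
    then have "\<forall>e\<in>set (word_arrows r a w i). valid_arrow n r e"
      using False by (simp add: word_path_eq)
    then show "set w \<subseteq> {1..n}"
      by (metis (no_types, lifting) image_subsetI word_arrows_fst set_map valid_arrow_def)
  qed (use valid_word_arrows[OF i] False in \<open>simp add: word_path_eq\<close>)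
qed (simp add: word_path_eq)

lemma valid_path_tgt_less: "valid_path n r a p \<Longrightarrow> path_tgt p < r"
  by (cases p) (auto simp: valid_arrow_def arr_tgt_def)

lemma word_path_path_word: "valid_path n r a p \<Longrightarrow> word_path r a (path_word p) (path_tgt p) = p"
proof (cases p)
  case (Arrs es)
  assume "valid_path n r a p"
  then show ?thesis using Arrs valid_path_eq_word_arrows
    by (auto simp: word_path_eq arr_tgt_def)
qed (simp add: word_path_eq)

lemma valid_path_word_subset: "valid_path n r a p \<Longrightarrow> set (path_word p) \<subseteq> {1..n}"
  using valid_word_path_iff[OF valid_path_tgt_less] word_path_path_word by metis

lemma path_mult_word_path:
  assumes "i < r"
  shows "path_mult r a (word_path r a u (vertex_shift r a i v)) (word_path r a v i)
       = Some (word_path r a (u @ v) i)"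
proof -
  have "path_cat (word_path r a u (vertex_shift r a i v)) (word_path r a v i) = word_path r a (u @ v) i"
    using assms by (cases "u = []"; cases "v = []") (simp_all add: word_path_eq word_arrows_append)
  then show ?thesis
    using assms by (simp add: path_mult_def path_src_word_path vertex_shift_less)
qed

lemma path_mult_valid_eq:
  assumes "valid_path n r a q1" "valid_path n r a q2" "path_mult r a q1 q2 = Some p"
  shows "q1 = word_path r a (path_word q1) (vertex_shift r a (path_tgt q2) (path_word q2))"
    and "q2 = word_path r a (path_word q2) (path_tgt q2)"
    and "p = word_path r a (path_word q1 @ path_word q2) (path_tgt q2)"
proof -
  let ?j = "path_tgt q2"
  have j: "?j < r" using valid_path_tgt_less[OF assms(2)] .
  show q2: "q2 = word_path r a (path_word q2) ?j" using word_path_path_word[OF assms(2)] by simp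
  have "path_tgt q1 = path_src r a q2" using assms(3) by (simp add: path_mult_def split: if_splits)
  also have "\<dots> = vertex_shift r a ?j (path_word q2)"
    using path_src_word_path[OF j, of "path_word q2"] by (simp only: q2[symmetric])
  finally show q1: "q1 = word_path r a (path_word q1) (vertex_shift r a ?j (path_word q2))"
    using word_path_path_word[OF assms(1)] by simp
  show "p = word_path r a (path_word q1 @ path_word q2) ?j"
    using path_mult_word_path[OF j, of "path_word q1" "path_word q2"] assms(3)
    by (simp only: q1[symmetric] q2[symmetric]) simp
qed

lemma valid_path_mult:
  assumes "valid_path n r a q1" "valid_path n r a q2" "path_mult r a q1 q2 = Some p"
  shows "valid_path n r a p"
  using path_mult_valid_eq[OF assms] valid_path_word_subset[OF assms(1)] valid_path_word_subset[OF assms(2)]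
    valid_word_path_iff[OF valid_path_tgt_less[OF assms(2)]] by simp

lemma sum_path_factorisations:
  fixes F G :: "qpath \<Rightarrow> 'k::comm_ring"
  assumes "i < r" and "\<And>q. F q \<noteq> 0 \<Longrightarrow> valid_path n r a q" and "\<And>q. G q \<noteq> 0 \<Longrightarrow> valid_path n r a q"
  shows "(\<Sum>(q1, q2)\<in>{(q1, q2). F q1 \<noteq> 0 \<and> G q2 \<noteq> 0 \<and> path_mult r a q1 q2 = Some (word_path r a w i)}.
            F q1 * G q2)
       = (\<Sum>(u, v)\<in>word_splits w. F (word_path r a u (vertex_shift r a i v)) * G (word_path r a v i))"
proof -
  let ?T = "{(q1, q2). F q1 \<noteq> 0 \<and> G q2 \<noteq> 0 \<and> path_mult r a q1 q2 = Some (word_path r a w i)}"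
  define g where "g = (\<lambda>(u, v). (word_path r a u (vertex_shift r a i v), word_path r a v i))"
  have "(q1, q2) \<in> g ` word_splits w" if "(q1, q2) \<in> ?T" for q1 q2
  proof -
    have valid: "valid_path n r a q1" "valid_path n r a q2"
      and mult: "path_mult r a q1 q2 = Some (word_path r a w i)" using that assms by auto
    note eqs = path_mult_valid_eq[OF valid mult]
    have "w = path_word q1 @ path_word q2"
      using arg_cong[OF eqs(3), of path_word] by simp
    moreover have "i = path_tgt q2"
      using arg_cong[OF eqs(3), of path_tgt] \<open>i < r\<close> valid_path_tgt_less[OF valid(2)] by simp
    ultimately show ?thesis
      using eqs(1,2) by (intro image_eqI[of _ _ "(path_word q1, path_word q2)"]) (auto simp: g_def)
  qed
  then have "?T \<subseteq> g ` word_splits w" by auto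
  moreover have "\<forall>y\<in>g ` word_splits w - ?T. (case y of (q1, q2) \<Rightarrow> F q1 * G q2) = 0"
    using path_mult_word_path[OF \<open>i < r\<close>] by (auto simp: g_def)
  ultimately have "(\<Sum>(q1, q2)\<in>?T. F q1 * G q2) = (\<Sum>y\<in>g ` word_splits w. case y of (q1, q2) \<Rightarrow> F q1 * G q2)"
    by (intro sum.mono_neutral_left) simp_all
  also have "\<dots> = (\<Sum>x\<in>word_splits w. case g x of (q1, q2) \<Rightarrow> F q1 * G q2)"
    by (rule sum.reindex[unfolded comp_def], rule inj_onI) (auto simp: g_def dest: arg_cong[of _ _ path_word])
  finally have "(\<Sum>(q1, q2)\<in>?T. F q1 * G q2) = (\<Sum>x\<in>word_splits w. case g x of (q1, q2) \<Rightarrow> F q1 * G q2)" .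
  then show ?thesis by (simp add: g_def case_prod_beta)
qed

end

section \<open>The path algebra as a twisted word algebra\<close>

text \<open>An element \<open>H\<close> of \<open>vertex_word_alg n r a\<close> stands for the combination of the paths
  \<open>word_path r a w i\<close> with coefficients \<open>H w i\<close>.\<close>

definition shift_vertices :: "nat \<Rightarrow> (nat \<Rightarrow> nat) \<Rightarrow> nat list \<Rightarrow> (nat \<Rightarrow> 'k::field) \<Rightarrow> nat \<Rightarrow> 'k" where
  "shift_vertices r a v c = (\<lambda>i. if i < r then c (vertex_shift r a i v) else 0)"

definition vertex_vectors :: "nat \<Rightarrow> (nat \<Rightarrow> 'k::field) set" where
  "vertex_vectors r = {c. \<forall>i\<ge>r. c i = 0}"

definition vertex_unit :: "nat \<Rightarrow> nat \<Rightarrow> 'k::field" where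
  "vertex_unit r = (\<lambda>i. if i < r then 1 else 0)"

abbreviation vertex_word_alg :: "nat \<Rightarrow> nat \<Rightarrow> (nat \<Rightarrow> nat) \<Rightarrow> (nat list \<Rightarrow> nat \<Rightarrow> 'k::field) ring" where
  "vertex_word_alg n r a \<equiv>
     twisted_word_alg (shift_vertices r a) {w. set w \<subseteq> {1..n}} (vertex_vectors r) (vertex_unit r)"

definition to_paths :: "nat \<Rightarrow> nat \<Rightarrow> (nat \<Rightarrow> nat) \<Rightarrow> (nat list \<Rightarrow> nat \<Rightarrow> 'k::field) \<Rightarrow> qpath \<Rightarrow> 'k" where
  "to_paths n r a H = (\<lambda>p. if valid_path n r a p then H (path_word p) (path_tgt p) else 0)"

definition of_paths :: "nat \<Rightarrow> nat \<Rightarrow> (nat \<Rightarrow> nat) \<Rightarrow> (qpath \<Rightarrow> 'k::field) \<Rightarrow> nat list \<Rightarrow> nat \<Rightarrow> 'k" where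
  "of_paths n r a F = (\<lambda>w i. if i < r \<and> set w \<subseteq> {1..n} then F (word_path r a w i) else 0)"

context mckay_quiver
begin

lemma word_twist_shift_vertices:
  "word_twist (shift_vertices r a) {w. set w \<subseteq> {1..n}} (vertex_vectors r) (vertex_unit r :: nat \<Rightarrow> 'k::field)"
proof
  fix u v and x :: "nat \<Rightarrow> 'k"
  have "((int i - int (wdeg a v)) mod int r - int (wdeg a u)) mod int r
      = (int i - int (wdeg a (u @ v))) mod int r" for i
    by (simp add: mod_diff_left_eq algebra_simps)
  then show "shift_vertices r a (u @ v) x = shift_vertices r a v (shift_vertices r a u x)"
    using vertex_shift_less r_pos by (auto simp: shift_vertices_def)
qed (auto simp: shift_vertices_def vertex_vectors_def vertex_unit_def vertex_shift_less)

lemma ring_vertex_word_alg: "ring (vertex_word_alg n r a :: (nat list \<Rightarrow> nat \<Rightarrow> 'k::field) ring)"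
  by (rule word_twist.twisted_word_alg_ring[OF word_twist_shift_vertices])

lemma vertex_word_alg_carrierD:
  assumes "H \<in> carrier (vertex_word_alg n r a)" "H w i \<noteq> 0"
  shows "set w \<subseteq> {1..n}" "i < r"
  using assms by (auto simp: twisted_word_alg_def vertex_vectors_def fun_eq_iff) (meson not_le)

lemma to_paths_word_path:
  assumes "H \<in> carrier (vertex_word_alg n r a)" "i < r"
  shows "to_paths n r a H (word_path r a w i) = H w i"
  using assms vertex_word_alg_carrierD[OF assms(1), of w i]
  by (auto simp: to_paths_def valid_word_path_iff)

lemma to_paths_nonzero: "to_paths n r a H q \<noteq> 0 \<Longrightarrow> valid_path n r a q"
  by (auto simp: to_paths_def split: if_splits)

lemma to_paths_carrier:
  assumes H: "H \<in> carrier (vertex_word_alg n r a)"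
  shows "to_paths n r a H \<in> carrier (path_alg n r a)"
proof -
  have "{p. to_paths n r a H p \<noteq> 0} \<subseteq> (\<lambda>(w, i). word_path r a w i) ` ({w. H w \<noteq> 0} \<times> {..<r})"
  proof
    fix p assume "p \<in> {p. to_paths n r a H p \<noteq> 0}"
    then have valid: "valid_path n r a p" and "H (path_word p) (path_tgt p) \<noteq> 0"
      by (auto simp: to_paths_def split: if_splits)
    then show "p \<in> (\<lambda>(w, i). word_path r a w i) ` ({w. H w \<noteq> 0} \<times> {..<r})"
      using word_path_path_word[OF valid] valid_path_tgt_less[OF valid]
      by (intro image_eqI[of _ _ "(path_word p, path_tgt p)"]) auto
  qed
  moreover have "finite {w. H w \<noteq> 0}" using H by (simp add: twisted_word_alg_def)
  ultimately have "finite {p. to_paths n r a H p \<noteq> 0}" by (auto intro: finite_subset)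
  then show ?thesis by (auto simp: path_alg_def to_paths_def split: if_splits)
qed

lemma of_paths_carrier:
  assumes F: "F \<in> carrier (path_alg n r a)"
  shows "of_paths n r a F \<in> carrier (vertex_word_alg n r a)"
proof -
  have "{w. of_paths n r a F w \<noteq> 0} \<subseteq> path_word ` {p. F p \<noteq> 0}"
    by (force simp: of_paths_def fun_eq_iff split: if_splits)
  then have "finite {w. of_paths n r a F w \<noteq> 0}"
    using F by (auto simp: path_alg_def intro: finite_subset)
  moreover have "set w \<subseteq> {1..n}" if "of_paths n r a F w \<noteq> 0" for w
    using that by (auto simp: of_paths_def fun_eq_iff split: if_splits)
  ultimately show ?thesis by (auto simp: twisted_word_alg_def vertex_vectors_def of_paths_def)
qed

lemma to_paths_of_paths:
  assumes F: "F \<in> carrier (path_alg n r a)"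
  shows "to_paths n r a (of_paths n r a F) = F"
proof
  fix p
  have "F p = 0" if "\<not> valid_path n r a p" using F that by (auto simp: path_alg_def)
  then show "to_paths n r a (of_paths n r a F) p = F p"
    using valid_path_tgt_less valid_path_word_subset word_path_path_word
    by (auto simp: to_paths_def of_paths_def)
qed

lemma to_paths_inj:
  assumes "H1 \<in> carrier (vertex_word_alg n r a)" "H2 \<in> carrier (vertex_word_alg n r a)"
    and "to_paths n r a H1 = to_paths n r a H2"
  shows "H1 = H2"
proof (intro ext)
  fix w i
  show "H1 w i = H2 w i"
  proof (cases "i < r")
    case True
    then show ?thesis using assms to_paths_word_path by metis
  next
    case False
    then show ?thesis using vertex_word_alg_carrierD(2)[OF assms(1)] vertex_word_alg_carrierD(2)[OF assms(2)]
      by (metis (full_types))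
  qed
qed

lemma to_paths_mult:
  assumes H1: "H1 \<in> carrier (vertex_word_alg n r a)" and H2: "H2 \<in> carrier (vertex_word_alg n r a)"
  shows "to_paths n r a (twisted_conv (shift_vertices r a) H1 H2)
       = to_paths n r a H1 \<otimes>\<^bsub>path_alg n r a\<^esub> to_paths n r a H2"
proof
  fix p
  let ?T = "{(q1, q2). to_paths n r a H1 q1 \<noteq> 0 \<and> to_paths n r a H2 q2 \<noteq> 0 \<and> path_mult r a q1 q2 = Some p}"
  have prod: "(to_paths n r a H1 \<otimes>\<^bsub>path_alg n r a\<^esub> to_paths n r a H2) p
      = (\<Sum>(q1, q2)\<in>?T. to_paths n r a H1 q1 * to_paths n r a H2 q2)"
    by (simp add: path_alg_def)
  show "to_paths n r a (twisted_conv (shift_vertices r a) H1 H2) p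
      = (to_paths n r a H1 \<otimes>\<^bsub>path_alg n r a\<^esub> to_paths n r a H2) p"
  proof (cases "valid_path n r a p")
    case False
    then have no_factors: "?T = {}" using valid_path_mult to_paths_nonzero by blast
    have "(to_paths n r a H1 \<otimes>\<^bsub>path_alg n r a\<^esub> to_paths n r a H2) p = 0"
      unfolding prod no_factors by simp
    then show ?thesis using False by (simp add: to_paths_def)
  next
    case True
    define w i where "w = path_word p" and "i = path_tgt p"
    have i: "i < r" using valid_path_tgt_less[OF True] by (simp add: i_def)
    have p: "p = word_path r a w i" using word_path_path_word[OF True] by (simp add: w_def i_def)
    have "(\<Sum>(q1, q2)\<in>?T. to_paths n r a H1 q1 * to_paths n r a H2 q2)
        = (\<Sum>(u, v)\<in>word_splits w. H1 u (vertex_shift r a i v) * H2 v i)"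
      unfolding p
      by (subst sum_path_factorisations[OF i to_paths_nonzero to_paths_nonzero])
         (auto simp: to_paths_word_path[OF H1 vertex_shift_less] to_paths_word_path[OF H2 i]
           intro!: sum.cong)
    also have "\<dots> = twisted_conv (shift_vertices r a) H1 H2 w i"
      unfolding twisted_conv_def sum_fun_apply
      by (intro sum.cong refl) (auto simp: shift_vertices_def i)
    finally show ?thesis using prod True by (simp add: to_paths_def w_def i_def)
  qed
qed

lemma to_paths_hom:
  "to_paths n r a \<in> ring_hom (vertex_word_alg n r a) (path_alg n r a :: (qpath \<Rightarrow> 'k::field) ring)"
proof (rule ring_hom_memI)
  fix x y :: "nat list \<Rightarrow> nat \<Rightarrow> 'k" assume x: "x \<in> carrier (vertex_word_alg n r a)" and y: "y \<in> carrier (vertex_word_alg n r a)"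
  show "to_paths n r a (x \<otimes>\<^bsub>vertex_word_alg n r a\<^esub> y)
      = to_paths n r a x \<otimes>\<^bsub>path_alg n r a\<^esub> to_paths n r a y"
    using to_paths_mult[OF x y] by (simp add: twisted_word_alg_def)
  show "to_paths n r a (x \<oplus>\<^bsub>vertex_word_alg n r a\<^esub> y)
      = to_paths n r a x \<oplus>\<^bsub>path_alg n r a\<^esub> to_paths n r a y"
    by (auto simp: to_paths_def twisted_word_alg_def path_alg_def)
next
  show "to_paths n r a \<one>\<^bsub>vertex_word_alg n r a\<^esub> = \<one>\<^bsub>path_alg n r a\<^esub>"
  proof
    fix p show "to_paths n r a \<one>\<^bsub>vertex_word_alg n r a\<^esub> p = \<one>\<^bsub>path_alg n r a\<^esub> p"
      by (cases p) (auto simp: to_paths_def path_alg_def twisted_word_alg_def vertex_unit_def)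
  qed
qed (rule to_paths_carrier)

lemma ring_path_alg: "ring (path_alg n r a :: (qpath \<Rightarrow> 'k::field) ring)"
proof -
  have "ring ((path_alg n r a :: (qpath \<Rightarrow> 'k) ring)
      \<lparr>carrier := to_paths n r a ` carrier (vertex_word_alg n r a),
       zero := to_paths n r a \<zero>\<^bsub>vertex_word_alg n r a\<^esub>\<rparr>)"
    by (rule ring.ring_hom_imp_img_ring[OF ring_vertex_word_alg to_paths_hom])
  moreover have "to_paths n r a ` carrier (vertex_word_alg n r a) = carrier (path_alg n r a :: (qpath \<Rightarrow> 'k) ring)"
    using to_paths_carrier of_paths_carrier to_paths_of_paths by (force simp: image_iff)
  moreover have "to_paths n r a \<zero>\<^bsub>vertex_word_alg n r a\<^esub> = (\<zero>\<^bsub>path_alg n r a\<^esub> :: qpath \<Rightarrow> 'k)"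
    by (auto simp: to_paths_def twisted_word_alg_def path_alg_def)
  ultimately show ?thesis by simp
qed

lemma path_alg_minus:
  assumes "y \<in> carrier (path_alg n r a)"
  shows "\<ominus>\<^bsub>path_alg n r a\<^esub> y = (\<lambda>q. - y q :: 'k::field)"
proof -
  interpret ring "path_alg n r a :: (qpath \<Rightarrow> 'k) ring" by (rule ring_path_alg)
  have "(\<lambda>q. - y q) \<in> carrier (path_alg n r a)" "(\<lambda>q. - y q) \<oplus>\<^bsub>path_alg n r a\<^esub> y = \<zero>\<^bsub>path_alg n r a\<^esub>"
    using assms by (simp_all add: path_alg_def)
  then show ?thesis using minus_equality[OF _ assms] by simp
qed

end

section \<open>Roots of unity\<close>

definition root_zpow :: "'k::field \<Rightarrow> nat \<Rightarrow> int \<Rightarrow> 'k" where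
  "root_zpow \<xi> r k = \<xi> ^ nat (k mod int r)"

lemma root_zpow_cong: "x mod int r = y mod int r \<Longrightarrow> root_zpow \<xi> r x = root_zpow \<xi> r y"
  by (simp add: root_zpow_def)

lemma root_zpow_zero [simp]: "root_zpow \<xi> r 0 = 1"
  by (simp add: root_zpow_def)

locale root_of_unity =
  fixes r :: nat and \<xi> :: "'k::field_char_0"
  assumes order_pos: "0 < r" and root: "\<xi> ^ r = 1"
    and primitive: "\<forall>p. 0 < p \<and> p < r \<longrightarrow> \<xi> ^ p \<noteq> 1"
begin

lemma power_mod_order: "\<xi> ^ (m mod r) = \<xi> ^ m"
proof -
  have "\<xi> ^ m = \<xi> ^ (r * (m div r) + m mod r)" by simp
  also have "\<dots> = (\<xi> ^ r) ^ (m div r) * \<xi> ^ (m mod r)" by (simp only: power_add power_mult)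
  finally show ?thesis using root by simp
qed

lemma root_zpow_of_nat: "root_zpow \<xi> r (int m) = \<xi> ^ m"
proof -
  have "nat (int m mod int r) = m mod r" by (metis nat_int zmod_int)
  then show ?thesis using power_mod_order[of m] by (simp add: root_zpow_def)
qed

lemma root_zpow_add: "root_zpow \<xi> r (x + y) = root_zpow \<xi> r x * root_zpow \<xi> r y"
proof -
  have "root_zpow \<xi> r x * root_zpow \<xi> r y = \<xi> ^ (nat (x mod int r) + nat (y mod int r))"
    by (simp add: root_zpow_def power_add)
  also have "\<dots> = root_zpow \<xi> r (int (nat (x mod int r) + nat (y mod int r)))"
    by (simp only: root_zpow_of_nat)
  also have "\<dots> = root_zpow \<xi> r (x + y)"
    by (rule root_zpow_cong) (use order_pos in \<open>simp add: mod_add_eq\<close>)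
  finally show ?thesis by simp
qed

lemma root_zpow_mult_of_nat: "root_zpow \<xi> r (int k * d) = root_zpow \<xi> r d ^ k"
proof (induction k)
  case (Suc k)
  have "int (Suc k) * d = d + int k * d" by (simp add: algebra_simps)
  then show ?case using Suc by (simp add: root_zpow_add)
qed simp

lemma root_zpow_power_order: "root_zpow \<xi> r d ^ r = 1"
proof -
  have "root_zpow \<xi> r d ^ r = (\<xi> ^ r) ^ nat (d mod int r)"
    by (simp add: root_zpow_def power_mult[symmetric] mult.commute)
  then show ?thesis using root by simp
qed

lemma sum_root_zpow_orthogonal:
  assumes "p1 < r" "p2 < r"
  shows "(\<Sum>k<r. root_zpow \<xi> r (int k * (int p1 - int p2))) = (if p1 = p2 then of_nat r else 0)"
proof (cases "p1 = p2")
  case False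
  have "nat ((int p1 - int p2) mod int r) \<noteq> 0"
  proof
    assume "nat ((int p1 - int p2) mod int r) = 0"
    then have "int p1 mod int r = int p2 mod int r"
      using order_pos by (simp add: nat_eq_iff mod_eq_dvd_iff mod_eq_0_iff_dvd)
    then have "int (p1 mod r) = int (p2 mod r)" by (simp only: zmod_int)
    then have "p1 = p2" using assms by simp
    then show False using False by simp
  qed
  moreover have "nat ((int p1 - int p2) mod int r) < r" using order_pos by (simp add: nat_less_iff)
  ultimately have "root_zpow \<xi> r (int p1 - int p2) \<noteq> 1"
    using primitive by (simp add: root_zpow_def)
  then have "(\<Sum>k<r. root_zpow \<xi> r (int p1 - int p2) ^ k) = 0"
    using root_zpow_power_order by (simp add: sum_gp_strict)
  then show ?thesis using False by (simp add: root_zpow_mult_of_nat)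
qed simp

end

section \<open>The isomorphism \<open>k\<langle>x\<rangle> * G \<cong> kQ\<^sub>G\<close>\<close>

lemma skew_alg_free_carrier_iff:
  "F \<in> carrier (skew_alg (free_alg n) \<sigma> r) \<longleftrightarrow>
     (\<forall>p<r. F p \<in> carrier (free_alg n)) \<and> (\<forall>p\<ge>r. F p = (\<lambda>w. 0 :: 'k::field))"
  by (simp add: skew_alg_def free_alg_def)

definition mod_sum_pairs :: "nat \<Rightarrow> nat \<Rightarrow> (nat \<times> nat) set" where
  "mod_sum_pairs r p = {(q, s). q < r \<and> s < r \<and> (q + s) mod r = p}"

lemma finite_mod_sum_pairs [simp]: "finite (mod_sum_pairs r p)"
  by (rule finite_subset[of _ "{..<r} \<times> {..<r}"]) (auto simp: mod_sum_pairs_def)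

lemma skew_alg_mult_eq:
  "(F \<otimes>\<^bsub>skew_alg A \<sigma> r\<^esub> G) p =
     (if p < r then finsum A (\<lambda>(q, s). F q \<otimes>\<^bsub>A\<^esub> (\<sigma> ^^ q) (G s)) (mod_sum_pairs r p) else \<zero>\<^bsub>A\<^esub>)"
  by (simp add: skew_alg_def mod_sum_pairs_def)

lemma skew_alg_free_summands_carrier:
  assumes "F \<in> carrier (skew_alg (free_alg n) (gact \<xi> a) r)" "G \<in> carrier (skew_alg (free_alg n) (gact \<xi> a) r)"
  shows "(\<lambda>(q, s). F q \<otimes>\<^bsub>free_alg n\<^esub> (gact \<xi> a ^^ q) (G s)) \<in> mod_sum_pairs r p \<rightarrow> carrier (free_alg n :: (nat list \<Rightarrow> 'k::field) ring)"
  using assms by (auto simp: mod_sum_pairs_def skew_alg_free_carrier_iff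
      intro!: ring.ring_simprules(5)[OF ring_free_alg] gact_funpow_carrier)

lemma skew_alg_free_mult_apply:
  assumes "F \<in> carrier (skew_alg (free_alg n) (gact \<xi> a) r)" "G \<in> carrier (skew_alg (free_alg n) (gact \<xi> a) r)"
    and "p < r"
  shows "(F \<otimes>\<^bsub>skew_alg (free_alg n) (gact \<xi> a) r\<^esub> G) p w =
    (\<Sum>(q, s)\<in>mod_sum_pairs r p. \<Sum>(u, v)\<in>word_splits w. F q u * (\<xi> ^ (q * wdeg a v) * G s v :: 'k::field))"
  using assms finsum_free_alg[OF finite_mod_sum_pairs skew_alg_free_summands_carrier[OF assms(1,2)]]
  by (simp add: skew_alg_mult_eq free_alg_mult twisted_conv_def gact_funpow case_prod_beta sum_fun_apply)

lemma skew_alg_free_mult_closed: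
  assumes "F \<in> carrier (skew_alg (free_alg n) (gact \<xi> a) r)" "G \<in> carrier (skew_alg (free_alg n) (gact \<xi> a) r)"
  shows "F \<otimes>\<^bsub>skew_alg (free_alg n) (gact \<xi> a) r\<^esub> G \<in> carrier (skew_alg (free_alg n) (gact \<xi> a) r :: (nat \<Rightarrow> nat list \<Rightarrow> 'k::field) ring)"
proof -
  interpret ring "free_alg n :: (nat list \<Rightarrow> 'k) ring" by (rule ring_free_alg)
  have "(F \<otimes>\<^bsub>skew_alg (free_alg n) (gact \<xi> a) r\<^esub> G) p \<in> carrier (free_alg n)" if "p < r" for p
    using that finsum_closed[OF skew_alg_free_summands_carrier[OF assms]] by (simp add: skew_alg_mult_eq)
  moreover have "(F \<otimes>\<^bsub>skew_alg (free_alg n) (gact \<xi> a) r\<^esub> G) p = (\<lambda>w. 0)" if "\<not> p < r" for p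
    using that by (simp add: skew_alg_mult_eq free_alg_def)
  ultimately show ?thesis by (simp add: skew_alg_free_carrier_iff)
qed

text \<open>Since \<open>g^p = \<Sum>_i \<xi>^(-ip) \<rho>_i\<close>, the value at the vertex \<open>i\<close> of the Fourier transform of
  \<open>\<Sum>_p F p g^p\<close> is its coefficient of \<open>\<rho>_i\<close>.\<close>

definition fourier :: "nat \<Rightarrow> 'k \<Rightarrow> (nat \<Rightarrow> nat list \<Rightarrow> 'k) \<Rightarrow> nat list \<Rightarrow> nat \<Rightarrow> 'k::field" where
  "fourier r \<xi> F = (\<lambda>w i. if i < r then (\<Sum>p<r. F p w * root_zpow \<xi> r (- (int i * int p))) else 0)"

definition fourier_inv :: "nat \<Rightarrow> 'k \<Rightarrow> (nat list \<Rightarrow> nat \<Rightarrow> 'k) \<Rightarrow> nat \<Rightarrow> nat list \<Rightarrow> 'k::field" where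
  "fourier_inv r \<xi> H =
     (\<lambda>p w. if p < r then (\<Sum>i<r. H w i * root_zpow \<xi> r (int i * int p)) / of_nat r else 0)"

locale mckay_skew = mckay_quiver n r a + root_of_unity r \<xi>
  for n r :: nat and a :: "nat \<Rightarrow> nat" and \<xi> :: "'k::field_char_0"
begin

abbreviation skew_free :: "(nat \<Rightarrow> nat list \<Rightarrow> 'k) ring" where
  "skew_free \<equiv> skew_alg (free_alg n) (gact \<xi> a) r"

lemma root_zpow_vertex_shift:
  "root_zpow \<xi> r (- (int (vertex_shift r a i v) * int q))
     = \<xi> ^ (q * wdeg a v) * root_zpow \<xi> r (- (int i * int q))"
proof -
  have "root_zpow \<xi> r (- (int (vertex_shift r a i v) * int q))
      = root_zpow \<xi> r ((- int q) * ((int i - int (wdeg a v)) mod int r))"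
    using r_pos by (simp add: algebra_simps)
  also have "\<dots> = root_zpow \<xi> r ((- int q) * (int i - int (wdeg a v)))"
    by (rule root_zpow_cong) (metis mod_minus_eq mod_mult_right_eq mult_minus_left)
  also have "\<dots> = root_zpow \<xi> r (int (q * wdeg a v) + - (int i * int q))"
    by (simp add: algebra_simps)
  finally show ?thesis by (simp only: root_zpow_add root_zpow_of_nat)
qed

lemma root_zpow_mod_sum:
  "root_zpow \<xi> r (- (int i * int ((q + s) mod r)))
     = root_zpow \<xi> r (- (int i * int q)) * root_zpow \<xi> r (- (int i * int s))"
proof -
  have "root_zpow \<xi> r (- (int i * int ((q + s) mod r))) = root_zpow \<xi> r ((- int i) * ((int q + int s) mod int r))"
    by (simp add: zmod_int)
  also have "\<dots> = root_zpow \<xi> r ((- int i) * (int q + int s))"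
    by (rule root_zpow_cong) (metis mod_minus_eq mod_mult_right_eq mult_minus_left)
  also have "\<dots> = root_zpow \<xi> r (- (int i * int q) + - (int i * int s))"
    by (simp add: algebra_simps)
  finally show ?thesis by (simp only: root_zpow_add)
qed

lemma fourier_carrier:
  assumes F: "F \<in> carrier skew_free"
  shows "fourier r \<xi> F \<in> carrier (vertex_word_alg n r a)"
proof -
  have coeffs: "\<And>p. p < r \<Longrightarrow> F p \<in> carrier (free_alg n)" using F by (simp add: skew_alg_free_carrier_iff)
  have nonzero: "\<exists>p<r. F p w \<noteq> 0" if "fourier r \<xi> F w \<noteq> 0" for w
  proof (rule ccontr)
    assume "\<not> (\<exists>p<r. F p w \<noteq> 0)"
    then have "fourier r \<xi> F w = 0" by (auto simp: fourier_def fun_eq_iff)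
    then show False using that by simp
  qed
  have "{w. fourier r \<xi> F w \<noteq> 0} \<subseteq> (\<Union>p<r. {w. F p w \<noteq> 0})" using nonzero by blast
  moreover have "finite (\<Union>p<r. {w. F p w \<noteq> 0})" using coeffs by (simp add: free_alg_carrier_iff)
  ultimately have "finite {w. fourier r \<xi> F w \<noteq> 0}" by (rule finite_subset)
  moreover have "set w \<subseteq> {1..n}" if "fourier r \<xi> F w \<noteq> 0" for w
    using nonzero[OF that] coeffs by (auto simp: free_alg_carrier_iff)
  ultimately show ?thesis by (simp add: twisted_word_alg_def fourier_def vertex_vectors_def)
qed

lemma fourier_inv_carrier:
  assumes H: "H \<in> carrier (vertex_word_alg n r a)"
  shows "fourier_inv r \<xi> H \<in> carrier skew_free"
proof -
  have "fourier_inv r \<xi> H p \<in> carrier (free_alg n)" if "p < r" for p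
  proof -
    have "{w. fourier_inv r \<xi> H p w \<noteq> 0} \<subseteq> {w. H w \<noteq> 0}" by (auto simp: fourier_inv_def)
    then show ?thesis using H by (auto simp: free_alg_carrier_iff twisted_word_alg_def intro: finite_subset)
  qed
  then show ?thesis by (simp add: skew_alg_free_carrier_iff fourier_inv_def)
qed

lemma fourier_fourier_inv:
  assumes H: "H \<in> carrier (vertex_word_alg n r a)"
  shows "fourier r \<xi> (fourier_inv r \<xi> H) = H"
proof (intro ext)
  fix w i
  show "fourier r \<xi> (fourier_inv r \<xi> H) w i = H w i"
  proof (cases "i < r")
    case False
    then show ?thesis using vertex_word_alg_carrierD(2)[OF H] by (force simp: fourier_def)
  next
    case True
    have "fourier r \<xi> (fourier_inv r \<xi> H) w i
        = (\<Sum>p<r. \<Sum>j<r. H w j / of_nat r * root_zpow \<xi> r (int p * (int j - int i)))"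
    proof -
      have "root_zpow \<xi> r (int j * int p) * root_zpow \<xi> r (- (int i * int p))
          = root_zpow \<xi> r (int p * (int j - int i))" for j p
        by (simp add: root_zpow_add[symmetric] algebra_simps)
      then show ?thesis using True
        by (simp add: fourier_def fourier_inv_def sum_divide_distrib sum_distrib_right mult.assoc)
    qed
    also have "\<dots> = (\<Sum>j<r. H w j / of_nat r * (\<Sum>p<r. root_zpow \<xi> r (int p * (int j - int i))))"
      by (subst sum.swap) (simp add: sum_distrib_left)
    also have "\<dots> = (\<Sum>j<r. if j = i then H w j else 0)"
      by (intro sum.cong refl) (use True r_pos in \<open>simp add: sum_root_zpow_orthogonal\<close>)
    finally show ?thesis using True by simp
  qed
qed

lemma fourier_inv_fourier:
  assumes F: "F \<in> carrier skew_free"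
  shows "fourier_inv r \<xi> (fourier r \<xi> F) = F"
proof (intro ext)
  fix p w
  show "fourier_inv r \<xi> (fourier r \<xi> F) p w = F p w"
  proof (cases "p < r")
    case False
    then show ?thesis using F by (simp add: fourier_inv_def skew_alg_free_carrier_iff)
  next
    case True
    have "fourier_inv r \<xi> (fourier r \<xi> F) p w
        = (\<Sum>i<r. \<Sum>q<r. F q w / of_nat r * root_zpow \<xi> r (int i * (int p - int q)))"
    proof -
      have "root_zpow \<xi> r (- (int i * int q)) * root_zpow \<xi> r (int i * int p)
          = root_zpow \<xi> r (int i * (int p - int q))" for i q
        by (simp add: root_zpow_add[symmetric] algebra_simps)
      then show ?thesis using True
        by (simp add: fourier_def fourier_inv_def sum_divide_distrib sum_distrib_right mult.assoc)
    qed
    also have "\<dots> = (\<Sum>q<r. F q w / of_nat r * (\<Sum>i<r. root_zpow \<xi> r (int i * (int p - int q))))"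
      by (subst sum.swap) (simp add: sum_distrib_left)
    also have "\<dots> = (\<Sum>q<r. if p = q then F q w else 0)"
      by (intro sum.cong refl) (use True r_pos in \<open>simp add: sum_root_zpow_orthogonal\<close>)
    finally show ?thesis using True by simp
  qed
qed

lemma fourier_mult_expand:
  assumes F: "F \<in> carrier skew_free" and G: "G \<in> carrier skew_free" and i: "i < r"
  shows "fourier r \<xi> (F \<otimes>\<^bsub>skew_free\<^esub> G) w i =
    (\<Sum>q<r. \<Sum>s<r. (\<Sum>(u, v)\<in>word_splits w. F q u * (\<xi> ^ (q * wdeg a v) * G s v)) *
       (root_zpow \<xi> r (- (int i * int q)) * root_zpow \<xi> r (- (int i * int s))))"
proof -
  let ?Z = "\<lambda>(q, s). (\<Sum>(u, v)\<in>word_splits w. F q u * (\<xi> ^ (q * wdeg a v) * G s v)) *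
              root_zpow \<xi> r (- (int i * int ((q + s) mod r)))"
  have "fourier r \<xi> (F \<otimes>\<^bsub>skew_free\<^esub> G) w i
      = (\<Sum>p<r. (F \<otimes>\<^bsub>skew_free\<^esub> G) p w * root_zpow \<xi> r (- (int i * int p)))"
    using i by (simp add: fourier_def)
  also have "\<dots> = (\<Sum>p<r. \<Sum>x\<in>mod_sum_pairs r p. ?Z x)"
    by (intro sum.cong refl)
       (auto simp: skew_alg_free_mult_apply[OF F G] sum_distrib_right mod_sum_pairs_def intro!: sum.cong)
  also have "\<dots> = (\<Sum>p<r. \<Sum>x\<in>{x \<in> {..<r} \<times> {..<r}. (fst x + snd x) mod r = p}. ?Z x)"
    by (intro sum.cong refl arg_cong2[where f = sum]) (auto simp: mod_sum_pairs_def)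
  also have "\<dots> = (\<Sum>x\<in>{..<r} \<times> {..<r}. ?Z x)"
    by (rule sum.group) (use r_pos in auto)
  finally show ?thesis
    by (simp add: sum.cartesian_product root_zpow_mod_sum)
qed

lemma twisted_conv_fourier_expand:
  assumes i: "i < r"
  shows "twisted_conv (shift_vertices r a) (fourier r \<xi> F) (fourier r \<xi> G) w i =
    (\<Sum>q<r. \<Sum>s<r. (\<Sum>(u, v)\<in>word_splits w. F q u * (\<xi> ^ (q * wdeg a v) * G s v)) *
       (root_zpow \<xi> r (- (int i * int q)) * root_zpow \<xi> r (- (int i * int s))))"
proof -
  have "twisted_conv (shift_vertices r a) (fourier r \<xi> F) (fourier r \<xi> G) w i
      = (\<Sum>(u, v)\<in>word_splits w. fourier r \<xi> F u (vertex_shift r a i v) * fourier r \<xi> G v i)"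
    unfolding twisted_conv_def sum_fun_apply using i
    by (intro sum.cong refl) (auto simp: shift_vertices_def)
  also have "\<dots> = (\<Sum>(u, v)\<in>word_splits w. \<Sum>q<r. \<Sum>s<r. F q u * (\<xi> ^ (q * wdeg a v) * G s v) *
                     (root_zpow \<xi> r (- (int i * int q)) * root_zpow \<xi> r (- (int i * int s))))"
  proof (intro sum.cong refl, clarify)
    fix u v
    have "fourier r \<xi> F u (vertex_shift r a i v) * fourier r \<xi> G v i
        = (\<Sum>q<r. F q u * root_zpow \<xi> r (- (int (vertex_shift r a i v) * int q))) *
          (\<Sum>s<r. G s v * root_zpow \<xi> r (- (int i * int s)))"
      using i vertex_shift_less by (simp add: fourier_def)
    then show "fourier r \<xi> F u (vertex_shift r a i v) * fourier r \<xi> G v i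
        = (\<Sum>q<r. \<Sum>s<r. F q u * (\<xi> ^ (q * wdeg a v) * G s v) *
             (root_zpow \<xi> r (- (int i * int q)) * root_zpow \<xi> r (- (int i * int s))))"
      unfolding root_zpow_vertex_shift
      by (simp add: sum_product algebra_simps) (subst sum.swap, simp add: algebra_simps)
  qed
  also have "\<dots> = (\<Sum>q<r. \<Sum>s<r. \<Sum>(u, v)\<in>word_splits w. F q u * (\<xi> ^ (q * wdeg a v) * G s v) *
                     (root_zpow \<xi> r (- (int i * int q)) * root_zpow \<xi> r (- (int i * int s))))"
  proof -
    have "(\<Sum>x\<in>W. \<Sum>q<r. \<Sum>s<r. h q s x) = (\<Sum>q<r. \<Sum>s<r. \<Sum>x\<in>W. h q s x)"
      for W and h :: "nat \<Rightarrow> nat \<Rightarrow> nat list \<times> nat list \<Rightarrow> 'k"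
      by (subst sum.swap) (intro sum.cong refl sum.swap)
    then show ?thesis unfolding case_prod_beta .
  qed
  finally show ?thesis by (simp add: sum_distrib_right case_prod_beta)
qed

lemma fourier_mult:
  assumes "F \<in> carrier skew_free" "G \<in> carrier skew_free"
  shows "fourier r \<xi> (F \<otimes>\<^bsub>skew_free\<^esub> G)
       = twisted_conv (shift_vertices r a) (fourier r \<xi> F) (fourier r \<xi> G)"
proof (intro ext)
  fix w i
  show "fourier r \<xi> (F \<otimes>\<^bsub>skew_free\<^esub> G) w i
      = twisted_conv (shift_vertices r a) (fourier r \<xi> F) (fourier r \<xi> G) w i"
    by (cases "i < r")
       (simp_all add: fourier_mult_expand[OF assms] twisted_conv_fourier_expand,
        simp add: fourier_def twisted_conv_def sum_fun_apply shift_vertices_def case_prod_beta)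
qed

lemma fourier_add:
  "fourier r \<xi> (F \<oplus>\<^bsub>skew_free\<^esub> G) = (\<lambda>w. fourier r \<xi> F w + fourier r \<xi> G w)"
  by (auto simp: fourier_def skew_alg_def free_alg_def sum.distrib algebra_simps fun_eq_iff)

lemma fourier_one: "fourier r \<xi> \<one>\<^bsub>skew_free\<^esub> = \<one>\<^bsub>vertex_word_alg n r a\<^esub>"
proof (intro ext)
  fix w i
  have "(\<Sum>p<r. \<one>\<^bsub>skew_free\<^esub> p w * root_zpow \<xi> r (- (int i * int p)))
      = (\<Sum>p<r. if p = 0 then (if w = [] then 1 else 0) else 0)"
    by (intro sum.cong refl) (auto simp: skew_alg_def free_alg_def root_zpow_def)
  also have "\<dots> = (if w = [] then 1 else 0)" using r_pos by simp
  finally have unit: "(\<Sum>p<r. \<one>\<^bsub>skew_free\<^esub> p w * root_zpow \<xi> r (- (int i * int p)))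
      = (if w = [] then 1 else 0)" .
  show "fourier r \<xi> \<one>\<^bsub>skew_free\<^esub> w i = \<one>\<^bsub>vertex_word_alg n r a\<^esub> w i"
    by (simp only: fourier_def unit) (simp add: twisted_word_alg_def vertex_unit_def)
qed

definition skew_to_path :: "(nat \<Rightarrow> nat list \<Rightarrow> 'k) \<Rightarrow> qpath \<Rightarrow> 'k" where
  "skew_to_path F = to_paths n r a (fourier r \<xi> F)"

lemma skew_to_path_carrier: "F \<in> carrier skew_free \<Longrightarrow> skew_to_path F \<in> carrier (path_alg n r a)"
  unfolding skew_to_path_def by (rule to_paths_carrier[OF fourier_carrier])

lemma skew_to_path_inj:
  "F \<in> carrier skew_free \<Longrightarrow> G \<in> carrier skew_free \<Longrightarrow> skew_to_path F = skew_to_path G \<Longrightarrow> F = G"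
  unfolding skew_to_path_def by (metis fourier_carrier fourier_inv_fourier to_paths_inj)

lemma skew_to_path_surj:
  assumes X: "X \<in> carrier (path_alg n r a)"
  obtains F where "F \<in> carrier skew_free" "X = skew_to_path F"
proof
  show "fourier_inv r \<xi> (of_paths n r a X) \<in> carrier skew_free"
    by (rule fourier_inv_carrier[OF of_paths_carrier[OF X]])
  show "X = skew_to_path (fourier_inv r \<xi> (of_paths n r a X))"
    unfolding skew_to_path_def fourier_fourier_inv[OF of_paths_carrier[OF X]] to_paths_of_paths[OF X] ..
qed

lemma skew_to_path_add: "skew_to_path (F \<oplus>\<^bsub>skew_free\<^esub> G) = (\<lambda>p. skew_to_path F p + skew_to_path G p)"
  by (auto simp: skew_to_path_def fourier_add to_paths_def)

lemma skew_to_path_uminus: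
  assumes "F \<in> carrier skew_free"
  shows "\<ominus>\<^bsub>path_alg n r a\<^esub> skew_to_path F = skew_to_path (\<lambda>p w. - F p w)"
  using path_alg_minus[OF skew_to_path_carrier[OF assms]]
  by (auto simp: skew_to_path_def to_paths_def fourier_def sum_negf fun_eq_iff)

lemma skew_to_path_hom: "skew_to_path \<in> ring_hom skew_free (path_alg n r a)"
proof (rule ring_hom_memI)
  fix F G assume "F \<in> carrier skew_free" "G \<in> carrier skew_free"
  then show "skew_to_path (F \<otimes>\<^bsub>skew_free\<^esub> G) = skew_to_path F \<otimes>\<^bsub>path_alg n r a\<^esub> skew_to_path G"
    unfolding skew_to_path_def by (simp add: fourier_mult to_paths_mult[OF fourier_carrier fourier_carrier])
  show "skew_to_path (F \<oplus>\<^bsub>skew_free\<^esub> G) = skew_to_path F \<oplus>\<^bsub>path_alg n r a\<^esub> skew_to_path G"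
    by (simp add: skew_to_path_add path_alg_def)
next
  show "skew_to_path \<one>\<^bsub>skew_free\<^esub> = \<one>\<^bsub>path_alg n r a\<^esub>"
    unfolding skew_to_path_def fourier_one using ring_hom_one[OF to_paths_hom] .
qed (rule skew_to_path_carrier)

end

section \<open>The ideals\<close>

text \<open>In the paper's notation, \<open>vertex_const r x\<close> and \<open>at_vertex x i\<close> are the Fourier transforms
  of \<open>x * 1\<close> and \<open>x * \<rho>_i\<close>, and \<open>group_power_vertices r \<xi> p\<close> that of \<open>1 * g^p\<close>.\<close>

definition vertex_const :: "nat \<Rightarrow> (nat list \<Rightarrow> 'k::field) \<Rightarrow> nat list \<Rightarrow> nat \<Rightarrow> 'k" where
  "vertex_const r x = (\<lambda>w i. if i < r then x w else 0)"

definition at_vertex :: "(nat list \<Rightarrow> 'k::field) \<Rightarrow> nat \<Rightarrow> nat list \<Rightarrow> nat \<Rightarrow> 'k" where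
  "at_vertex x i = (\<lambda>w i'. if i' = i then x w else 0)"

definition group_power_vertices :: "nat \<Rightarrow> 'k \<Rightarrow> nat \<Rightarrow> nat list \<Rightarrow> nat \<Rightarrow> 'k::field" where
  "group_power_vertices r \<xi> p = (\<lambda>w i. if w = [] \<and> i < r then root_zpow \<xi> r (- (int i * int p)) else 0)"

context mckay_quiver
begin

lemma vertex_const_carrier:
  assumes x: "x \<in> carrier (free_alg n)"
  shows "vertex_const r x \<in> carrier (vertex_word_alg n r a)"
proof -
  have "{w. vertex_const r x w \<noteq> 0} \<subseteq> {w. x w \<noteq> 0}" by (auto simp: vertex_const_def fun_eq_iff)
  then show ?thesis
    using x by (auto simp: twisted_word_alg_def free_alg_carrier_iff vertex_vectors_def vertex_const_def
        fun_eq_iff intro: finite_subset split: if_splits)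
qed

lemma at_vertex_carrier:
  assumes x: "x \<in> carrier (free_alg n)" and i: "i < r"
  shows "at_vertex x i \<in> carrier (vertex_word_alg n r a)"
proof -
  have "{w. at_vertex x i w \<noteq> 0} \<subseteq> {w. x w \<noteq> 0}" by (auto simp: at_vertex_def fun_eq_iff)
  then show ?thesis
    using x i by (auto simp: twisted_word_alg_def free_alg_carrier_iff vertex_vectors_def at_vertex_def
        fun_eq_iff intro: finite_subset split: if_splits)
qed

lemma vertex_const_mult:
  "vertex_const r (x \<otimes>\<^bsub>free_alg n\<^esub> y) = twisted_conv (shift_vertices r a) (vertex_const r x) (vertex_const r y)"
  using vertex_shift_less
  by (auto simp: vertex_const_def shift_vertices_def twisted_conv_def free_alg_mult sum_fun_apply
      case_prod_beta fun_eq_iff intro!: sum.cong)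

lemma to_paths_vertex_const:
  "to_paths n r a (vertex_const r x) = (\<lambda>p. if valid_path n r a p then x (path_word p) else 0)"
  using valid_path_tgt_less by (auto simp: to_paths_def vertex_const_def fun_eq_iff)

lemma to_paths_vertex_const_hom:
  "(\<lambda>x. to_paths n r a (vertex_const r x)) \<in> ring_hom (free_alg n) (path_alg n r a :: (qpath \<Rightarrow> 'k::field) ring)"
proof (rule ring_hom_memI)
  fix x y :: "nat list \<Rightarrow> 'k" assume x: "x \<in> carrier (free_alg n)" and y: "y \<in> carrier (free_alg n)"
  show "to_paths n r a (vertex_const r (x \<otimes>\<^bsub>free_alg n\<^esub> y))
      = to_paths n r a (vertex_const r x) \<otimes>\<^bsub>path_alg n r a\<^esub> to_paths n r a (vertex_const r y)"
    by (simp add: vertex_const_mult to_paths_mult[OF vertex_const_carrier[OF x] vertex_const_carrier[OF y]])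
  show "to_paths n r a (vertex_const r (x \<oplus>\<^bsub>free_alg n\<^esub> y))
      = to_paths n r a (vertex_const r x) \<oplus>\<^bsub>path_alg n r a\<^esub> to_paths n r a (vertex_const r y)"
    by (auto simp: to_paths_vertex_const free_alg_def path_alg_def)
next
  show "to_paths n r a (vertex_const r \<one>\<^bsub>free_alg n\<^esub>) = \<one>\<^bsub>path_alg n r a :: (qpath \<Rightarrow> 'k) ring\<^esub>"
  proof
    fix p show "to_paths n r a (vertex_const r \<one>\<^bsub>free_alg n\<^esub>) p = \<one>\<^bsub>path_alg n r a :: (qpath \<Rightarrow> 'k) ring\<^esub> p"
      by (cases p) (auto simp: to_paths_vertex_const free_alg_def path_alg_def)
  qed
qed (rule to_paths_carrier[OF vertex_const_carrier])

lemma phi_elem_eq_to_paths: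
  assumes x: "x \<in> carrier (free_alg n)" and i: "i < r"
  shows "phi_elem r a x i = to_paths n r a (at_vertex x i)"
proof
  fix p
  show "phi_elem r a x i p = to_paths n r a (at_vertex x i) p"
  proof (cases "valid_path n r a p \<and> path_tgt p = i")
    case True
    then have "{w. x w \<noteq> 0 \<and> word_path r a w i = p} \<subseteq> {path_word p}"
      and "p = word_path r a (path_word p) i"
      using word_path_path_word by (auto dest: arg_cong[where f = path_word])
    then have "phi_elem r a x i p = (\<Sum>w\<in>{path_word p}. x w)"
      unfolding phi_elem_def by (intro sum.mono_neutral_left) auto
    then show ?thesis using True by (simp add: to_paths_def at_vertex_def)
  next
    case False
    have "{w. x w \<noteq> 0 \<and> word_path r a w i = p} = {}"
      using False x i by (auto simp: free_alg_carrier_iff valid_word_path_iff)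
    then have "phi_elem r a x i p = 0" by (simp only: phi_elem_def sum.empty)
    then show ?thesis using False by (auto simp: to_paths_def at_vertex_def)
  qed
qed

lemma to_paths_vertex_const_eq_sum:
  "to_paths n r a (vertex_const r x) = (\<lambda>p. \<Sum>i<r. to_paths n r a (at_vertex x i) p)"
  using valid_path_tgt_less by (auto simp: to_paths_def at_vertex_def vertex_const_def fun_eq_iff)

lemma group_power_vertices_carrier: "group_power_vertices r \<xi> p \<in> carrier (vertex_word_alg n r a)"
  by (auto simp: twisted_word_alg_def group_power_vertices_def vertex_vectors_def fun_eq_iff
      intro: finite_subset[of _ "{[]}"])

lemma twisted_conv_vertex_const_group_power:
  "twisted_conv (shift_vertices r a) (vertex_const r x) (group_power_vertices r \<xi> p) w i
     = (if i < r then x w * root_zpow \<xi> r (- (int i * int p)) else 0)"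
proof -
  have "twisted_conv (shift_vertices r a) (vertex_const r x) (group_power_vertices r \<xi> p) w i
      = (\<Sum>(u, v)\<in>word_splits w. if v = [] then shift_vertices r a [] (vertex_const r x u) i *
                                  group_power_vertices r \<xi> p [] i else 0)"
    unfolding twisted_conv_def sum_fun_apply by (intro sum.cong refl) (auto simp: group_power_vertices_def)
  also have "\<dots> = shift_vertices r a [] (vertex_const r x w) i * group_power_vertices r \<xi> p [] i"
    by (rule sum_word_splits_Nil_right)
  finally show ?thesis by (auto simp: shift_vertices_def vertex_const_def group_power_vertices_def)
qed

end

context mckay_skew
begin

lemma fourier_eq_sum_group_powers:
  "fourier r \<xi> F = (\<lambda>w i. \<Sum>p<r.
     twisted_conv (shift_vertices r a) (vertex_const r (F p)) (group_power_vertices r \<xi> p) w i)"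
  by (auto simp: fourier_def twisted_conv_vertex_const_group_power fun_eq_iff)

lemma skew_to_path_eq_sum_group_powers:
  assumes "F \<in> carrier skew_free"
  shows "skew_to_path F = (\<lambda>q. \<Sum>p<r.
     (to_paths n r a (vertex_const r (F p)) \<otimes>\<^bsub>path_alg n r a\<^esub> to_paths n r a (group_power_vertices r \<xi> p)) q)"
proof -
  have "vertex_const r (F p) \<in> carrier (vertex_word_alg n r a)" for p
    using assms vertex_const_carrier
    by (cases "p < r") (auto simp: skew_alg_free_carrier_iff vertex_const_def twisted_word_alg_def
        vertex_vectors_def)
  then have "to_paths n r a (twisted_conv (shift_vertices r a) (vertex_const r (F p)) (group_power_vertices r \<xi> p))
      = to_paths n r a (vertex_const r (F p)) \<otimes>\<^bsub>path_alg n r a\<^esub> to_paths n r a (group_power_vertices r \<xi> p)" for p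
    by (rule to_paths_mult[OF _ group_power_vertices_carrier])
  moreover have "skew_to_path F = (\<lambda>q. \<Sum>p<r.
     to_paths n r a (twisted_conv (shift_vertices r a) (vertex_const r (F p)) (group_power_vertices r \<xi> p)) q)"
    unfolding skew_to_path_def fourier_eq_sum_group_powers by (auto simp: to_paths_def fun_eq_iff)
  ultimately show ?thesis by simp
qed

end

lemma gact_funpow_mem: "gact \<xi> a ` I \<subseteq> I \<Longrightarrow> x \<in> I \<Longrightarrow> (gact \<xi> a ^^ q) x \<in> I"
  by (induction q) auto

locale mckay_setup = mckay_skew n r a \<xi>
  for n r :: nat and a :: "nat \<Rightarrow> nat" and \<xi> :: "'k::field_char_0" +
  fixes h :: nat and f :: "nat \<Rightarrow> nat list \<Rightarrow> 'k"
  assumes f_in: "\<forall>j\<in>{1..h}. f j \<in> carrier (free_alg n)"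
    and G_acts: "gact \<xi> a ` rel_ideal n f h \<subseteq> rel_ideal n f h"
begin

abbreviation I :: "(nat list \<Rightarrow> 'k) set" where
  "I \<equiv> rel_ideal n f h"

abbreviation J :: "(qpath \<Rightarrow> 'k) set" where
  "J \<equiv> quiver_ideal n r a f h"

definition IG :: "(nat \<Rightarrow> nat list \<Rightarrow> 'k) set" where
  "IG = {F \<in> carrier skew_free. \<forall>p<r. F p \<in> I}"

lemma ideal_I: "ideal I (free_alg n)"
  unfolding rel_ideal_def by (rule ring.genideal_ideal[OF ring_free_alg]) (use f_in in auto)

lemma f_mem_I: "j \<in> {1..h} \<Longrightarrow> f j \<in> I"
proof -
  have "f ` {1..h} \<subseteq> I"
    unfolding rel_ideal_def by (rule ring.genideal_self[OF ring_free_alg]) (use f_in in auto)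
  then show "j \<in> {1..h} \<Longrightarrow> f j \<in> I" by auto
qed

lemma quiver_ideal_generators_carrier:
  "{phi_elem r a (f j) i | j i. j \<in> {1..h} \<and> i < r} \<subseteq> carrier (path_alg n r a)"
  using f_in by (auto simp: phi_elem_eq_to_paths intro!: to_paths_carrier at_vertex_carrier)

lemma ideal_J: "ideal J (path_alg n r a)"
  unfolding quiver_ideal_def by (rule ring.genideal_ideal[OF ring_path_alg quiver_ideal_generators_carrier])

lemma phi_elem_mem_J: "j \<in> {1..h} \<Longrightarrow> i < r \<Longrightarrow> phi_elem r a (f j) i \<in> J"
  using ring.genideal_self[OF ring_path_alg quiver_ideal_generators_carrier]
  unfolding quiver_ideal_def by blast

lemma sum_mem_J:
  assumes "finite A" "\<And>x. x \<in> A \<Longrightarrow> g x \<in> J"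
  shows "(\<lambda>q. \<Sum>x\<in>A. g x q) \<in> J"
proof -
  have "g \<in> A \<rightarrow> carrier (path_alg n r a)" using assms(2) ideal.Icarr[OF ideal_J] by auto
  then have "finsum (path_alg n r a) g A = (\<lambda>q. \<Sum>x\<in>A. g x q)"
    by (intro finsum_pointwise[OF ring_path_alg _ _ assms(1)]) (simp_all add: path_alg_def)
  then show ?thesis using finsum_in_ideal[OF ring_path_alg ideal_J assms(1), of g] assms(2) by simp
qed

lemma IG_add: "F \<in> IG \<Longrightarrow> G \<in> IG \<Longrightarrow> F \<oplus>\<^bsub>skew_free\<^esub> G \<in> IG"
proof -
  assume F: "F \<in> IG" and G: "G \<in> IG"
  interpret ring "free_alg n :: (nat list \<Rightarrow> 'k) ring" by (rule ring_free_alg)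
  have "(F \<oplus>\<^bsub>skew_free\<^esub> G) p \<in> I" if "p < r" for p
    using F G that additive_subgroup.a_closed[OF ideal.axioms(1)[OF ideal_I]]
    by (auto simp: IG_def skew_alg_def)
  moreover have "F \<oplus>\<^bsub>skew_free\<^esub> G \<in> carrier skew_free"
    using F G by (auto simp: IG_def skew_alg_def)
  ultimately show ?thesis by (simp add: IG_def)
qed

lemma IG_uminus: "F \<in> IG \<Longrightarrow> (\<lambda>p w. - F p w) \<in> IG"
proof -
  assume F: "F \<in> IG"
  have "(\<lambda>w. - F p w) \<in> I" if "p < r" for p
  proof -
    interpret ring "free_alg n :: (nat list \<Rightarrow> 'k) ring" by (rule ring_free_alg)
    have "F p \<in> carrier (free_alg n)" "F p \<in> I" using F that by (auto simp: IG_def skew_alg_free_carrier_iff)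
    moreover have "\<ominus>\<^bsub>free_alg n\<^esub> (F p) = (\<lambda>w. - F p w)"
      using \<open>F p \<in> carrier (free_alg n)\<close> by (intro minus_equality) (auto simp: free_alg_def)
    ultimately show ?thesis using additive_subgroup.a_inv_closed[OF ideal.axioms(1)[OF ideal_I]] by metis
  qed
  then show ?thesis using F by (auto simp: IG_def skew_alg_free_carrier_iff free_alg_carrier_iff)
qed

lemma IG_mult:
  assumes F: "F \<in> IG" and G: "G \<in> carrier skew_free"
  shows "G \<otimes>\<^bsub>skew_free\<^esub> F \<in> IG" and "F \<otimes>\<^bsub>skew_free\<^esub> G \<in> IG"
proof -
  have Fc: "F \<in> carrier skew_free" and FI: "\<And>p. p < r \<Longrightarrow> F p \<in> I" using F by (auto simp: IG_def)
  have Gc: "\<And>p. p < r \<Longrightarrow> G p \<in> carrier (free_alg n)" using G by (simp add: skew_alg_free_carrier_iff)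
  have "(G \<otimes>\<^bsub>skew_free\<^esub> F) p \<in> I" if "p < r" for p
  proof -
    have "G q \<otimes>\<^bsub>free_alg n\<^esub> (gact \<xi> a ^^ q) (F s) \<in> I" if "(q, s) \<in> mod_sum_pairs r p" for q s
      using that G_acts by (auto simp: mod_sum_pairs_def Gc FI gact_funpow_mem intro!: ideal.I_l_closed[OF ideal_I])
    then show ?thesis
      using that by (auto simp: skew_alg_mult_eq intro!: finsum_in_ideal[OF ring_free_alg ideal_I])
  qed
  then show "G \<otimes>\<^bsub>skew_free\<^esub> F \<in> IG" using skew_alg_free_mult_closed[OF G Fc] by (simp add: IG_def)
  have "(F \<otimes>\<^bsub>skew_free\<^esub> G) p \<in> I" if "p < r" for p
  proof -
    have "F q \<otimes>\<^bsub>free_alg n\<^esub> (gact \<xi> a ^^ q) (G s) \<in> I" if "(q, s) \<in> mod_sum_pairs r p" for q s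
      using that by (auto simp: mod_sum_pairs_def Gc FI gact_funpow_carrier intro!: ideal.I_r_closed[OF ideal_I])
    then show ?thesis
      using that by (auto simp: skew_alg_mult_eq intro!: finsum_in_ideal[OF ring_free_alg ideal_I])
  qed
  then show "F \<otimes>\<^bsub>skew_free\<^esub> G \<in> IG" using skew_alg_free_mult_closed[OF Fc G] by (simp add: IG_def)
qed

lemma ideal_image_IG: "ideal (skew_to_path ` IG) (path_alg n r a)"
proof (rule idealI[OF ring_path_alg])
  interpret P: ring "path_alg n r a :: (qpath \<Rightarrow> 'k) ring" by (rule ring_path_alg)
  have IG_carrier: "IG \<subseteq> carrier skew_free" by (auto simp: IG_def)
  have zero: "\<zero>\<^bsub>skew_free\<^esub> \<in> IG"
    using additive_subgroup.zero_closed[OF ideal.axioms(1)[OF ideal_I]]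
    by (auto simp: IG_def skew_alg_def free_alg_def)
  have uminus: "\<ominus>\<^bsub>path_alg n r a\<^esub> skew_to_path F \<in> skew_to_path ` IG" if "F \<in> IG" for F
    using that IG_carrier IG_uminus skew_to_path_uminus by auto
  have add: "X \<oplus>\<^bsub>path_alg n r a\<^esub> Y \<in> skew_to_path ` IG"
    if XY: "X \<in> skew_to_path ` IG" "Y \<in> skew_to_path ` IG" for X Y
  proof -
    obtain F G where "F \<in> IG" "G \<in> IG" "X = skew_to_path F" "Y = skew_to_path G" using XY by blast
    then have "X \<oplus>\<^bsub>path_alg n r a\<^esub> Y = skew_to_path (F \<oplus>\<^bsub>skew_free\<^esub> G)"
      by (simp add: skew_to_path_add path_alg_def)
    then show ?thesis using IG_add \<open>F \<in> IG\<close> \<open>G \<in> IG\<close> by simp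
  qed
  show "subgroup (skew_to_path ` IG) (add_monoid (path_alg n r a))"
    apply (rule P.add.subgroupI)
    subgoal using IG_carrier skew_to_path_carrier by auto
    subgoal using zero by blast
    subgoal for X using uminus by (auto simp: a_inv_def)
    subgoal for X Y using add[of X Y] by simp
    done
next
  fix X Y :: "qpath \<Rightarrow> 'k" assume "X \<in> skew_to_path ` IG" and Y: "Y \<in> carrier (path_alg n r a)"
  then obtain F where F: "F \<in> IG" "X = skew_to_path F" by blast
  obtain G where G: "G \<in> carrier skew_free" "Y = skew_to_path G" using skew_to_path_surj[OF Y] by blast
  have Fc: "F \<in> carrier skew_free" using F by (auto simp: IG_def)
  have "Y \<otimes>\<^bsub>path_alg n r a\<^esub> X = skew_to_path (G \<otimes>\<^bsub>skew_free\<^esub> F)"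
    using ring_hom_mult[OF skew_to_path_hom G(1) Fc] F G by simp
  then show "Y \<otimes>\<^bsub>path_alg n r a\<^esub> X \<in> skew_to_path ` IG" using IG_mult(1)[OF F(1) G(1)] by simp
  have "X \<otimes>\<^bsub>path_alg n r a\<^esub> Y = skew_to_path (F \<otimes>\<^bsub>skew_free\<^esub> G)"
    using ring_hom_mult[OF skew_to_path_hom Fc G(1)] F G by simp
  then show "X \<otimes>\<^bsub>path_alg n r a\<^esub> Y \<in> skew_to_path ` IG" using IG_mult(2)[OF F(1) G(1)] by simp
qed

lemma quiver_generators_in_image_IG:
  "{phi_elem r a (f j) i | j i. j \<in> {1..h} \<and> i < r} \<subseteq> skew_to_path ` IG"
proof
  fix X assume "X \<in> {phi_elem r a (f j) i | j i. j \<in> {1..h} \<and> i < r}"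
  then obtain j i where X: "X = phi_elem r a (f j) i" and j: "j \<in> {1..h}" and i: "i < r" by blast
  have fj: "f j \<in> carrier (free_alg n)" using f_in j by blast
  let ?H = "at_vertex (f j) i"
  have H: "?H \<in> carrier (vertex_word_alg n r a)" by (rule at_vertex_carrier[OF fj i])
  have "fourier_inv r \<xi> ?H p = free_scalar (root_zpow \<xi> r (int i * int p) / of_nat r) \<otimes>\<^bsub>free_alg n\<^esub> f j"
    if "p < r" for p
  proof -
    have "(\<Sum>i'<r. ?H w i' * root_zpow \<xi> r (int i' * int p))
        = (\<Sum>i'<r. if i' = i then f j w * root_zpow \<xi> r (int i * int p) else 0)" for w
      by (intro sum.cong refl) (auto simp: at_vertex_def)
    then have "(\<Sum>i'<r. ?H w i' * root_zpow \<xi> r (int i' * int p)) = f j w * root_zpow \<xi> r (int i * int p)" for w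
      using i by simp
    then show ?thesis using that by (simp add: fourier_inv_def free_scalar_mult fun_eq_iff)
  qed
  then have "fourier_inv r \<xi> ?H \<in> IG"
    using fourier_inv_carrier[OF H] ideal.I_l_closed[OF ideal_I f_mem_I[OF j] free_scalar_carrier]
    by (simp add: IG_def)
  moreover have "X = skew_to_path (fourier_inv r \<xi> ?H)"
    using X phi_elem_eq_to_paths[OF fj i] fourier_fourier_inv[OF H] by (simp add: skew_to_path_def)
  ultimately show "X \<in> skew_to_path ` IG" by blast
qed

lemma J_subset_image_IG: "J \<subseteq> skew_to_path ` IG"
  unfolding quiver_ideal_def
  by (rule ring.genideal_minimal[OF ring_path_alg ideal_image_IG quiver_generators_in_image_IG])

lemma vertex_const_f_mem_J: "j \<in> {1..h} \<Longrightarrow> to_paths n r a (vertex_const r (f j)) \<in> J"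
  unfolding to_paths_vertex_const_eq_sum
  using f_in by (auto simp: phi_elem_eq_to_paths[symmetric] phi_elem_mem_J intro!: sum_mem_J)

lemma vertex_const_I_mem_J: "x \<in> I \<Longrightarrow> to_paths n r a (vertex_const r x) \<in> J"
proof -
  have "ring_hom_ring (free_alg n) (path_alg n r a) (\<lambda>x. to_paths n r a (vertex_const r x))"
    by (rule ring_hom_ringI2[OF ring_free_alg ring_path_alg to_paths_vertex_const_hom])
  then have "ideal {x \<in> carrier (free_alg n). to_paths n r a (vertex_const r x) \<in> J} (free_alg n)"
    by (rule ring_hom_ring.ideal_vimage[OF _ ideal_J])
  then have "I \<subseteq> {x \<in> carrier (free_alg n). to_paths n r a (vertex_const r x) \<in> J}"
    unfolding rel_ideal_def
    by (rule ring.genideal_minimal[OF ring_free_alg]) (use f_in vertex_const_f_mem_J in auto)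
  then show "x \<in> I \<Longrightarrow> to_paths n r a (vertex_const r x) \<in> J" by blast
qed

lemma skew_to_path_IG_mem_J:
  assumes "F \<in> IG"
  shows "skew_to_path F \<in> J"
proof -
  have Fc: "F \<in> carrier skew_free" and FI: "\<And>p. p < r \<Longrightarrow> F p \<in> I" using assms by (auto simp: IG_def)
  show ?thesis unfolding skew_to_path_eq_sum_group_powers[OF Fc]
  proof (rule sum_mem_J)
    fix p assume "p \<in> {..<r}"
    then show "to_paths n r a (vertex_const r (F p)) \<otimes>\<^bsub>path_alg n r a\<^esub> to_paths n r a (group_power_vertices r \<xi> p) \<in> J"
      using FI by (auto intro!: ideal.I_r_closed[OF ideal_J vertex_const_I_mem_J] to_paths_carrier
          group_power_vertices_carrier)
  qed simp
qed

lemma skew_to_path_mem_J_iff: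
  assumes F: "F \<in> carrier skew_free"
  shows "skew_to_path F \<in> J \<longleftrightarrow> F \<in> IG"
proof
  assume "skew_to_path F \<in> J"
  then obtain G where G: "G \<in> IG" "skew_to_path F = skew_to_path G" using J_subset_image_IG by blast
  then have "F = G" using skew_to_path_inj[OF F] by (auto simp: IG_def)
  then show "F \<in> IG" using G by simp
qed (rule skew_to_path_IG_mem_J)

section \<open>The quotients\<close>

abbreviation QA :: "(nat list \<Rightarrow> 'k) set ring" where
  "QA \<equiv> free_alg n Quot I"

abbreviation skew_QA :: "(nat \<Rightarrow> (nat list \<Rightarrow> 'k) set) ring" where
  "skew_QA \<equiv> skew_alg QA (\<lambda>X. gact \<xi> a ` X) r"

abbreviation QP :: "(qpath \<Rightarrow> 'k) set ring" where
  "QP \<equiv> path_alg n r a Quot J"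

definition quot_coeffs :: "(nat \<Rightarrow> nat list \<Rightarrow> 'k) \<Rightarrow> nat \<Rightarrow> (nat list \<Rightarrow> 'k) set" where
  "quot_coeffs F = (\<lambda>p. if p < r then I +>\<^bsub>free_alg n\<^esub> F p else I)"

lemma gact_image_I: "gact \<xi> a ` I = I"
proof
  show "I \<subseteq> gact \<xi> a ` I"
  proof
    fix x assume x: "x \<in> I"
    have "(gact \<xi> a ^^ r) x = x"
      using root by (simp add: gact_funpow power_mult)
    moreover have "(gact \<xi> a ^^ r) x = gact \<xi> a ((gact \<xi> a ^^ (r - 1)) x)"
      using r_pos by (metis Suc_diff_1 comp_apply funpow.simps(2))
    ultimately show "x \<in> gact \<xi> a ` I" using gact_funpow_mem[OF G_acts x] by (metis image_eqI)
  qed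
qed (rule G_acts)

lemma gact_coset:
  assumes "x \<in> carrier (free_alg n)"
  shows "gact \<xi> a ` (I +>\<^bsub>free_alg n\<^esub> x) = I +>\<^bsub>free_alg n\<^esub> gact \<xi> a x"
proof -
  have "gact \<xi> a ` (I +>\<^bsub>free_alg n\<^esub> x) = (\<Union>y\<in>I. {gact \<xi> a (y \<oplus>\<^bsub>free_alg n\<^esub> x)})"
    unfolding a_r_coset_def' by auto
  also have "\<dots> = (\<Union>y\<in>I. {gact \<xi> a y \<oplus>\<^bsub>free_alg n\<^esub> gact \<xi> a x})"
    by (simp only: gact_add)
  also have "\<dots> = (\<Union>y\<in>gact \<xi> a ` I. {y \<oplus>\<^bsub>free_alg n\<^esub> gact \<xi> a x})" by auto
  finally show ?thesis unfolding a_r_coset_def' gact_image_I .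
qed

lemma gact_funpow_coset:
  assumes "x \<in> carrier (free_alg n)"
  shows "((\<lambda>X. gact \<xi> a ` X) ^^ q) (I +>\<^bsub>free_alg n\<^esub> x) = I +>\<^bsub>free_alg n\<^esub> (gact \<xi> a ^^ q) x"
  by (induction q) (simp_all add: gact_coset gact_funpow_carrier assms)

lemma coset_carrier: "x \<in> carrier (free_alg n) \<Longrightarrow> I +>\<^bsub>free_alg n\<^esub> x \<in> carrier QA"
  by (auto simp: FactRing_def A_RCOSETS_def')

lemma zero_QA: "\<zero>\<^bsub>QA\<^esub> = I"
  by (simp add: FactRing_def)

lemma skew_free_diff_carrier:
  assumes "F \<in> carrier skew_free" "G \<in> carrier skew_free"
  shows "(\<lambda>p w. F p w - G p w) \<in> carrier skew_free"
proof -
  have "(\<lambda>w. F p w - G p w) \<in> carrier (free_alg n)" if "p < r" for p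
  proof -
    have F: "finite {w. F p w \<noteq> 0}" "\<And>w. F p w \<noteq> 0 \<Longrightarrow> set w \<subseteq> {1..n}"
      and G: "finite {w. G p w \<noteq> 0}" "\<And>w. G p w \<noteq> 0 \<Longrightarrow> set w \<subseteq> {1..n}"
      using assms that by (auto simp: skew_alg_free_carrier_iff free_alg_carrier_iff)
    have "{w. F p w - G p w \<noteq> 0} \<subseteq> {w. F p w \<noteq> 0} \<union> {w. G p w \<noteq> 0}" by auto
    then have "finite {w. F p w - G p w \<noteq> 0}" by (rule finite_subset) (use F G in simp)
    moreover have "set w \<subseteq> {1..n}" if "F p w - G p w \<noteq> 0" for w
      using that F(2) G(2) by force
    ultimately show ?thesis by (simp only: free_alg_carrier_iff) blast
  qed
  then show ?thesis using assms by (simp add: skew_alg_free_carrier_iff)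
qed

lemma quot_coeffs_surj:
  "quot_coeffs ` carrier skew_free = carrier skew_QA"
proof
  show "quot_coeffs ` carrier skew_free \<subseteq> carrier skew_QA"
    by (auto simp: quot_coeffs_def skew_alg_free_carrier_iff skew_alg_def coset_carrier zero_QA)
next
  show "carrier skew_QA \<subseteq> quot_coeffs ` carrier skew_free"
  proof
    fix X assume X: "X \<in> carrier skew_QA"
    have "\<exists>x\<in>carrier (free_alg n). X p = I +>\<^bsub>free_alg n\<^esub> x" if "p < r" for p
      using X that by (auto simp: skew_alg_def FactRing_def A_RCOSETS_def')
    then obtain F where F: "\<And>p. p < r \<Longrightarrow> F p \<in> carrier (free_alg n) \<and> X p = I +>\<^bsub>free_alg n\<^esub> F p"
      by metis
    define F' where "F' = (\<lambda>p. if p < r then F p else (\<lambda>w. 0))"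
    have "F' \<in> carrier skew_free" using F by (simp add: F'_def skew_alg_free_carrier_iff)
    moreover have "quot_coeffs F' = X"
      using F X by (auto simp: quot_coeffs_def F'_def skew_alg_def FactRing_def fun_eq_iff)
    ultimately show "X \<in> quot_coeffs ` carrier skew_free" by blast
  qed
qed

lemma coset_zero: "I +>\<^bsub>free_alg n\<^esub> \<zero>\<^bsub>free_alg n\<^esub> = I"
  by (rule ring.a_rcos_zero[OF ring_free_alg ideal_I])
     (simp add: additive_subgroup.zero_closed ideal.axioms(1)[OF ideal_I])

lemma quot_coeffs_mult:
  assumes F: "F \<in> carrier skew_free" and G: "G \<in> carrier skew_free"
  shows "quot_coeffs (F \<otimes>\<^bsub>skew_free\<^esub> G) = quot_coeffs F \<otimes>\<^bsub>skew_QA\<^esub> quot_coeffs G"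
proof
  fix p
  show "quot_coeffs (F \<otimes>\<^bsub>skew_free\<^esub> G) p = (quot_coeffs F \<otimes>\<^bsub>skew_QA\<^esub> quot_coeffs G) p"
  proof (cases "p < r")
    case True
    interpret Q: ring QA by (rule ideal.quotient_is_ring[OF ideal_I])
    let ?g = "\<lambda>(q, s). F q \<otimes>\<^bsub>free_alg n\<^esub> (gact \<xi> a ^^ q) (G s)"
    have g: "?g \<in> mod_sum_pairs r p \<rightarrow> carrier (free_alg n)"
      by (rule skew_alg_free_summands_carrier[OF F G])
    have "quot_coeffs (F \<otimes>\<^bsub>skew_free\<^esub> G) p = finsum QA (\<lambda>x. I +>\<^bsub>free_alg n\<^esub> ?g x) (mod_sum_pairs r p)"
      using True ring_hom_ring.hom_finsum[OF ideal.rcos_ring_hom_ring[OF ideal_I] g]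
      by (simp add: quot_coeffs_def skew_alg_mult_eq comp_def)
    also have "\<dots> = finsum QA (\<lambda>(q, s). quot_coeffs F q \<otimes>\<^bsub>QA\<^esub> ((\<lambda>X. gact \<xi> a ` X) ^^ q) (quot_coeffs G s))
        (mod_sum_pairs r p)"
      using F G g ring_hom_mult[OF ideal.rcos_ring_hom[OF ideal_I]]
      by (intro Q.finsum_cong')
         (auto simp: mod_sum_pairs_def quot_coeffs_def skew_alg_free_carrier_iff gact_funpow_coset
           coset_carrier gact_funpow_carrier)
    finally show ?thesis using True by (simp add: skew_alg_mult_eq)
  qed (simp add: quot_coeffs_def skew_alg_mult_eq FactRing_def)
qed

lemma quot_coeffs_hom: "quot_coeffs \<in> ring_hom skew_free skew_QA"
proof (rule ring_hom_memI)
  fix F G assume "F \<in> carrier skew_free" "G \<in> carrier skew_free"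
  then show "quot_coeffs (F \<oplus>\<^bsub>skew_free\<^esub> G) = quot_coeffs F \<oplus>\<^bsub>skew_QA\<^esub> quot_coeffs G"
    using ring_hom_add[OF ideal.rcos_ring_hom[OF ideal_I]]
    by (auto simp: quot_coeffs_def skew_alg_def skew_alg_free_carrier_iff FactRing_def fun_eq_iff)
next
  show "quot_coeffs \<one>\<^bsub>skew_free\<^esub> = \<one>\<^bsub>skew_QA\<^esub>"
    using r_pos coset_zero by (auto simp: quot_coeffs_def skew_alg_def FactRing_def fun_eq_iff)
qed (use quot_coeffs_surj quot_coeffs_mult in blast)+

lemma quot_coeffs_eq_iff:
  assumes "F \<in> carrier skew_free" "G \<in> carrier skew_free"
  shows "quot_coeffs F = quot_coeffs G \<longleftrightarrow> (\<lambda>p w. F p w - G p w) \<in> IG"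
proof -
  interpret R: ring "free_alg n :: (nat list \<Rightarrow> 'k) ring" by (rule ring_free_alg)
  have coeffs: "F p \<in> carrier (free_alg n)" "G p \<in> carrier (free_alg n)" if "p < r" for p
    using assms that by (auto simp: skew_alg_free_carrier_iff)
  have minus: "F p \<ominus>\<^bsub>free_alg n\<^esub> G p = (\<lambda>w. F p w - G p w)" if "p < r" for p
  proof -
    have "\<ominus>\<^bsub>free_alg n\<^esub> G p = (\<lambda>w. - G p w)"
      using coeffs[OF that] by (intro R.minus_equality) (auto simp: free_alg_def)
    then show ?thesis by (simp add: a_minus_def free_alg_def)
  qed
  have "quot_coeffs F = quot_coeffs G \<longleftrightarrow> (\<forall>p<r. F p \<ominus>\<^bsub>free_alg n\<^esub> G p \<in> I)"
    using R.quotient_eq_iff_same_a_r_cos[OF ideal_I coeffs] by (auto simp: quot_coeffs_def fun_eq_iff)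
  also have "\<dots> \<longleftrightarrow> (\<lambda>p w. F p w - G p w) \<in> IG"
    using skew_free_diff_carrier[OF assms] by (auto simp: IG_def minus)
  finally show ?thesis .
qed

lemma path_quotient_hom: "(\<lambda>F. J +>\<^bsub>path_alg n r a\<^esub> skew_to_path F) \<in> ring_hom skew_free QP"
  using ring_hom_trans[OF skew_to_path_hom ideal.rcos_ring_hom[OF ideal_J]] by (simp add: comp_def)

lemma path_quotient_surj: "(\<lambda>F. J +>\<^bsub>path_alg n r a\<^esub> skew_to_path F) ` carrier skew_free = carrier QP"
proof -
  have "skew_to_path ` carrier skew_free = carrier (path_alg n r a)"
    using skew_to_path_carrier skew_to_path_surj by blast
  then show ?thesis by (force simp: FactRing_def A_RCOSETS_def')
qed

lemma path_quotient_eq_iff: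
  assumes "F \<in> carrier skew_free" "G \<in> carrier skew_free"
  shows "J +>\<^bsub>path_alg n r a\<^esub> skew_to_path F = J +>\<^bsub>path_alg n r a\<^esub> skew_to_path G
     \<longleftrightarrow> (\<lambda>p w. F p w - G p w) \<in> IG"
proof -
  interpret P: ring "path_alg n r a :: (qpath \<Rightarrow> 'k) ring" by (rule ring_path_alg)
  have "skew_to_path F \<ominus>\<^bsub>path_alg n r a\<^esub> skew_to_path G = skew_to_path (\<lambda>p w. F p w - G p w)"
    using path_alg_minus[OF skew_to_path_carrier[OF assms(2)]]
    by (auto simp: a_minus_def path_alg_def skew_to_path_def to_paths_def fourier_def
        sum_subtractf left_diff_distrib fun_eq_iff)
  then show ?thesis
    using P.quotient_eq_iff_same_a_r_cos[OF ideal_J skew_to_path_carrier skew_to_path_carrier, OF assms]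
      skew_to_path_mem_J_iff[OF skew_free_diff_carrier[OF assms]] by simp
qed

lemma skew_free_add_closed:
  "F \<in> carrier skew_free \<Longrightarrow> G \<in> carrier skew_free \<Longrightarrow> F \<oplus>\<^bsub>skew_free\<^esub> G \<in> carrier skew_free"
proof -
  interpret ring "free_alg n :: (nat list \<Rightarrow> 'k) ring" by (rule ring_free_alg)
  show "F \<in> carrier skew_free \<Longrightarrow> G \<in> carrier skew_free \<Longrightarrow> F \<oplus>\<^bsub>skew_free\<^esub> G \<in> carrier skew_free"
    by (auto simp: skew_alg_def)
qed

lemma skew_free_one_closed: "\<one>\<^bsub>skew_free\<^esub> \<in> carrier skew_free"
proof -
  interpret ring "free_alg n :: (nat list \<Rightarrow> 'k) ring" by (rule ring_free_alg)
  show ?thesis using r_pos by (auto simp: skew_alg_def)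
qed

lemma scalar_images:
  fixes c :: 'k
  defines "S \<equiv> \<lambda>p. if p = 0 then free_scalar c else \<zero>\<^bsub>free_alg n\<^esub>"
  shows "S \<in> carrier skew_free"
    and "quot_coeffs S = (\<lambda>p. if p = 0 then I +>\<^bsub>free_alg n\<^esub> free_scalar c else \<zero>\<^bsub>QA\<^esub>)"
    and "skew_to_path S = path_scalar r c"
proof -
  interpret R: ring "free_alg n :: (nat list \<Rightarrow> 'k) ring" by (rule ring_free_alg)
  have zero: "\<zero>\<^bsub>free_alg n\<^esub> = (\<lambda>w. 0 :: 'k)" by (simp add: free_alg_def)
  show "S \<in> carrier skew_free"
    unfolding skew_alg_free_carrier_iff S_def zero
    using free_scalar_carrier[of c n] R.zero_closed[unfolded zero] r_pos by auto
  show "quot_coeffs S = (\<lambda>p. if p = 0 then I +>\<^bsub>free_alg n\<^esub> free_scalar c else \<zero>\<^bsub>QA\<^esub>)"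
    using r_pos coset_zero by (auto simp: quot_coeffs_def S_def zero_QA fun_eq_iff)
  have "fourier r \<xi> S w i = (if i < r \<and> w = [] then c else 0)" for w i
  proof -
    have "(\<Sum>p<r. S p w * root_zpow \<xi> r (- (int i * int p))) = (\<Sum>p<r. if p = 0 then free_scalar c w else 0)"
      by (intro sum.cong refl) (auto simp: S_def free_alg_def)
    also have "\<dots> = free_scalar c w" using r_pos by simp
    finally have sum_eq: "(\<Sum>p<r. S p w * root_zpow \<xi> r (- (int i * int p))) = free_scalar c w" .
    show ?thesis by (simp only: fourier_def sum_eq) (simp add: free_scalar_def)
  qed
  then show "skew_to_path S = path_scalar r c"
    by (auto simp: skew_to_path_def to_paths_def path_scalar_def fun_eq_iff split: qpath.split)
qed

theorem skew_quotient_iso: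
  "\<exists>\<Phi>. \<Phi> \<in> ring_iso skew_QA QP
     \<and> (\<forall>c. \<Phi> (\<lambda>p. if p = 0 then I +>\<^bsub>free_alg n\<^esub> free_scalar c else \<zero>\<^bsub>QA\<^esub>)
            = J +>\<^bsub>path_alg n r a\<^esub> path_scalar r c)"
proof -
  let ?\<Phi> = "\<lambda>X. J +>\<^bsub>path_alg n r a\<^esub> skew_to_path (SOME F. F \<in> carrier skew_free \<and> quot_coeffs F = X)"
  have fibres: "quot_coeffs F = quot_coeffs G
      \<longleftrightarrow> J +>\<^bsub>path_alg n r a\<^esub> skew_to_path F = J +>\<^bsub>path_alg n r a\<^esub> skew_to_path G"
    if "F \<in> carrier skew_free" "G \<in> carrier skew_free" for F G
    using quot_coeffs_eq_iff[OF that] path_quotient_eq_iff[OF that] by simp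
  note induced = ring_iso_of_equal_fibres[OF quot_coeffs_hom quot_coeffs_surj
      path_quotient_hom path_quotient_surj fibres]
  have iso: "?\<Phi> \<in> ring_iso skew_QA QP"
    by (rule induced(1)) (simp_all add: skew_alg_free_mult_closed skew_free_add_closed skew_free_one_closed)
  have \<Phi>_quot_coeffs: "?\<Phi> (quot_coeffs F) = J +>\<^bsub>path_alg n r a\<^esub> skew_to_path F" if "F \<in> carrier skew_free" for F
    by (rule induced(2)) (simp_all add: skew_alg_free_mult_closed skew_free_add_closed skew_free_one_closed that)
  show ?thesis
  proof (intro exI[of _ ?\<Phi>] conjI allI)
    fix c :: 'k
    show "?\<Phi> (\<lambda>p. if p = 0 then I +>\<^bsub>free_alg n\<^esub> free_scalar c else \<zero>\<^bsub>QA\<^esub>)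
        = J +>\<^bsub>path_alg n r a\<^esub> path_scalar r c"
      using \<Phi>_quot_coeffs[OF scalar_images(1)[of c]] scalar_images(2,3)[of c] by simp
  qed (rule iso)
qed

end

theorem theorem5p3:
  fixes \<xi> :: "'k::field_char_0" and n r h :: nat and a :: "nat \<Rightarrow> nat"
    and f :: "nat \<Rightarrow> nat list \<Rightarrow> 'k"
  assumes alg_closed: "\<forall>p :: 'k poly. degree p > 0 \<longrightarrow> (\<exists>x. poly p x = 0)"
    and r_pos: "r \<ge> 1"
    and prim: "\<xi> ^ r = 1" "\<forall>p. 0 < p \<and> p < r \<longrightarrow> \<xi> ^ p \<noteq> 1"
    and a_range: "\<forall>j\<in>{1..n}. 0 < a j \<and> a j \<le> r"
    and g_order: "\<forall>p. 0 < p \<and> p < r \<longrightarrow> (\<exists>j\<in>{1..n}. \<xi> ^ (p * a j) \<noteq> 1)"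
    and f_in: "\<forall>j\<in>{1..h}. f j \<in> carrier (free_alg n)"
    and f_graded: "\<forall>j\<in>{1..h}. homogeneous_pos (f j)"
    and noeth: "noetherian_nc (free_alg n Quot rel_ideal n f h)"
    and G_acts: "gact \<xi> a ` rel_ideal n f h \<subseteq> rel_ideal n f h"
  shows "\<exists>\<Phi>. \<Phi> \<in> ring_iso
             (skew_alg (free_alg n Quot rel_ideal n f h) (\<lambda>X. gact \<xi> a ` X) r)
             (path_alg n r a Quot quiver_ideal n r a f h)
           \<and> (\<forall>c::'k. \<Phi> (\<lambda>p. if p = 0 then rel_ideal n f h +>\<^bsub>free_alg n\<^esub> free_scalar c
                                else \<zero>\<^bsub>free_alg n Quot rel_ideal n f h\<^esub>)
                     = quiver_ideal n r a f h +>\<^bsub>path_alg n r a\<^esub> path_scalar r c)"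
proof -
  interpret mckay_setup n r a \<xi> h f
    by unfold_locales (use r_pos prim f_in G_acts in auto)
  show ?thesis by (rule skew_quotient_iso)
qed

end
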